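(* For integers $n\ge0$ and $m\ge0$, the out-degree $Y_{n,0}$ of the root node $0_1$ in a random ordered increasing $k$-tree of size $n$ satisfies \[ \mathbb{P}\{Y_{n,0}=m\}=\frac{\binom{m-\frac{k-1}{k}}{m}}{\binom{n-\frac{k}{k+1}}{n}}\sum_{\ell=0}^{m}\binom{m}{\ell}(-1)^{\ell}\binom{n-1-\frac{k\ell}{k+1}}{n}. \] Moreover, as $n\to\infty$, $n^{-\frac{k}{k+1}}Y_{n,0}$ converges in distribution to a random variable $Y_0$ uniquely determined by its moments, which are, for all integers $s\ge0$, \[ \mathbb{E}(Y_0^s)=\frac{\Gamma(\frac{1}{k+1})\,\Gamma(s+\frac1k)}{\Gamma(\frac1k)\,\Gamma(\frac{k}{k+1}s+\frac{1}{k+1})}. \]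
   Context: Fix an integer $k\ge1$. An ordered increasing $k$-tree of size $n\ge0$ is built as follows. Start with the root-clique $K_0$: $k$ pairwise adjacent vertices labelled $0_1,\dots,0_k$ (the root nodes; each label $0_\ell$ has value $0$). For $j=1,\dots,n$ in turn, node $j$ is inserted by choosing a currently existing $k$-clique $K$ and attaching $j$ to it, i.e. adding edges from $j$ to all $k$ vertices of $K$; $j$ is then a child of $K$ and the vertices of $K$ are the parents of $j$. The $k$-cliques available for attachment are the root-clique and, for every previously inserted node $x$ attached to a clique $K'$, the $k$ cliques $\{x\}\cup(K'\setminus\{w\})$, $w\in K'$. The children of each $k$-clique are linearly ordered: if $K$ currently has $d^+(K)$ children, there are $d^+(K)+1$ positions at which the new child may be placed, and the choice of position is part of the structure. Thus there are $1+(k+1)(j-1)$ ways to insert node $j$, and distinct sequences of choices give distinct trees. A random ordered increasing $k$-tree of size $n$ is one chosen uniformly among all of them; equivalently, it is produced by the process in which node $n$ is attached to the clique $K$ with probability $\frac{d^+(K)+1}{1+(k+1)(n-1)}$ (and a uniformly random position among the $d^+(K)+1$). The out-degree of a node $u$ is the number of nodes having $u$ as a parent (for a root node this is its number of non-root neighbours). For real $x$ and integer $m\ge0$, $\binom{x}{m}=x(x-1)\cdots(x-m+1)/m!$, and $\binom{x}{m}=0$ for $m<0$. *)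

theory Defs
  imports "HOL-Probability.Probability"
begin

text \<open>Vertices: root nodes 0_1,...,0_k are Root 1,...,Root k; node j is Node j.\<close>
datatype vertex = Root nat | Node nat

text \<open>A choice for inserting a node: the clique it is attached to and its position
  among the (current) children of that clique, a number in 0..d+(K).\<close>
type_synonym choice = "vertex set \<times> nat"

definition root_clique :: "nat \<Rightarrow> vertex set" where
  "root_clique k = Root ` {1..k}"

text \<open>Cliques available after inserting nodes 1..length ts (node i+1 is the i-th entry).\<close>
definition cliques :: "nat \<Rightarrow> choice list \<Rightarrow> vertex set set" where
  "cliques k ts = insert (root_clique k)
     (\<Union>i<length ts. (\<lambda>w. insert (Node (Suc i)) (fst (ts ! i) - {w})) ` fst (ts ! i))"

definition outdeg_clique :: "choice list \<Rightarrow> vertex set \<Rightarrow> nat" where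
  "outdeg_clique ts K = card {i. i < length ts \<and> fst (ts ! i) = K}"

inductive valid_tree :: "nat \<Rightarrow> choice list \<Rightarrow> bool" for k :: nat where
  Nil: "valid_tree k []"
| snoc: "valid_tree k ts \<Longrightarrow> K \<in> cliques k ts \<Longrightarrow> p \<le> outdeg_clique ts K
          \<Longrightarrow> valid_tree k (ts @ [(K, p)])"

text \<open>Ordered increasing k-trees of size n (as sequences of insertion choices).\<close>
definition trees :: "nat \<Rightarrow> nat \<Rightarrow> choice list set" where
  "trees k n = {ts. valid_tree k ts \<and> length ts = n}"

definition root_outdeg :: "choice list \<Rightarrow> nat" where
  "root_outdeg ts = card {i. i < length ts \<and> Root 1 \<in> fst (ts ! i)}"

definition random_tree :: "nat \<Rightarrow> nat \<Rightarrow> choice list pmf" where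
  "random_tree k n = pmf_of_set (trees k n)"

end

theory Submission
  imports Defs "HOL-Probability.Probability" "HOL-Real_Asymp.Real_Asymp"
begin

(*
  A tree of size n+1 is a tree of size n extended by one
  insertion (K, p): a clique K and a position p \<le> d+(K).  Counting insertions gives
  |trees k n| = \<Prod>j<n. (1 + (k+1) j), and among the 1 + (k+1) n insertions exactly
  1 + k d attach the new node to a clique containing 0_1 when 0_1 has out-degree d.
  Hence the law of the out-degree satisfies a two-term recurrence (root_prob).

  Part 2 (exact law).  The closed form of the paper satisfies the same recurrence
  and the same initial values, which proves the first claim.

  The rising moments E (Y + 1/k)^(s) have a product formula;
  Gamma-function asymptotics of Pochhammer ratios give the limits of the moments of
  n^(-k/(k+1)) Y_n; they grow slowly enough for the exponential moment series to
  converge (log-convexity of Gamma).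

  A general theorem: if all moments of a sequence of
  real distributions converge to m_j with \<Sum> m_j t^j / j! convergent, then the
  sequence converges weakly to the unique distribution with moments m_j.
*)

lemma cliques_snoc:
  "cliques k (ts @ [(K,p)]) = cliques k ts \<union> (\<lambda>w. insert (Node (Suc (length ts))) (K - {w})) ` K"
proof -
  have "(\<Union>i<length (ts @ [(K,p)]). (\<lambda>w. insert (Node (Suc i)) (fst ((ts @ [(K,p)]) ! i) - {w})) ` fst ((ts @ [(K,p)]) ! i))
     = (\<Union>i<length ts. (\<lambda>w. insert (Node (Suc i)) (fst (ts ! i) - {w})) ` fst (ts ! i))
       \<union> (\<lambda>w. insert (Node (Suc (length ts))) (K - {w})) ` K"
    by (simp add: lessThan_Suc nth_append Un_commute)
  then show ?thesis unfolding cliques_def by (simp add: Un_assoc)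
qed

lemma root_outdeg_snoc:
  "root_outdeg (ts @ [x]) = root_outdeg ts + (if Root 1 \<in> fst x then 1 else 0)"
proof -
  have "{i. i < length (ts @ [x]) \<and> Root 1 \<in> fst ((ts @ [x]) ! i)} =
        {i. i < length ts \<and> Root 1 \<in> fst (ts ! i)} \<union> (if Root 1 \<in> fst x then {length ts} else {})"
    by (auto simp: nth_append less_Suc_eq)
  then show ?thesis unfolding root_outdeg_def by (simp add: card_insert_if)
qed

lemma cliques_Nil: "cliques k [] = {root_clique k}"
  unfolding cliques_def by simp

lemma card_root_clique: "card (root_clique k) = k"
  unfolding root_clique_def by (subst card_image) (auto simp: inj_on_def)

text \<open>Invariant of valid trees: every available clique has k elements, all of them
  already inserted.  This makes the k cliques created by an insertion new and distinct.\<close>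

lemma cliques_invariant:
  assumes "valid_tree k ts" "k \<ge> 1"
  shows "\<forall>C\<in>cliques k ts. card C = k \<and> (\<forall>j. Node j \<in> C \<longrightarrow> j \<le> length ts)"
  using assms
proof (induction rule: valid_tree.induct)
  case Nil
  then show ?case using card_root_clique[of k] by (auto simp: cliques_Nil root_clique_def)
next
  case (snoc ts K p)
  have K: "card K = k" "\<And>j. Node j \<in> K \<Longrightarrow> j \<le> length ts"
    using snoc by auto
  have fin: "finite K" using K(1) snoc.prems by (intro card_ge_0_finite) auto
  have new: "card (insert (Node (Suc (length ts))) (K - {w})) = k" if "w \<in> K" for w
  proof -
    have "Node (Suc (length ts)) \<notin> K - {w}" using K(2) by force
    then have "card (insert (Node (Suc (length ts))) (K - {w})) = Suc (card (K - {w}))"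
      using fin by simp
    also have "\<dots> = k" using that K(1) fin snoc.prems by (simp add: card_Diff_singleton)
    finally show ?thesis .
  qed
  show ?case unfolding cliques_snoc
  proof
    fix C assume "C \<in> cliques k ts \<union> (\<lambda>w. insert (Node (Suc (length ts))) (K - {w})) ` K"
    then show "card C = k \<and> (\<forall>j. Node j \<in> C \<longrightarrow> j \<le> length (ts @ [(K, p)]))"
    proof
      assume "C \<in> cliques k ts"
      then show ?thesis using snoc.IH snoc.prems by fastforce
    next
      assume "C \<in> (\<lambda>w. insert (Node (Suc (length ts))) (K - {w})) ` K"
      then obtain w where "w \<in> K" "C = insert (Node (Suc (length ts))) (K - {w})" by blast
      then show ?thesis using new K(2) by fastforce
    qed
  qed
qed

lemma clique_props:
  assumes "valid_tree k ts" "k \<ge> 1" "C \<in> cliques k ts"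
  shows "finite C" "card C = k" "\<And>j. Node j \<in> C \<Longrightarrow> j \<le> length ts"
  using cliques_invariant[OF assms(1,2)] assms(2,3) by (auto intro: card_ge_0_finite)

lemma new_cliques_inj:
  assumes "valid_tree k ts" "k \<ge> 1" "K \<in> cliques k ts"
  shows "inj_on (\<lambda>w. insert (Node (Suc (length ts))) (K - {w})) K"
proof (rule inj_onI)
  fix w w' assume ww: "w \<in> K" "w' \<in> K"
    and eq: "insert (Node (Suc (length ts))) (K - {w}) = insert (Node (Suc (length ts))) (K - {w'})"
  have "Node (Suc (length ts)) \<notin> K" using clique_props(3)[OF assms] by force
  then have "K - {w} = K - {w'}"
    using arg_cong[OF eq, of "\<lambda>C. C - {Node (Suc (length ts))}"] by auto
  then show "w = w'" using ww by blast
qed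

lemma new_cliques_disjoint:
  assumes "valid_tree k ts" "k \<ge> 1"
  shows "cliques k ts \<inter> (\<lambda>w. insert (Node (Suc (length ts))) (K - {w})) ` K = {}"
  using clique_props(3)[OF assms] by fastforce

text \<open>There are 1 + k n cliques, and 1 + (k - 1) d of them contain the root 0_1,
  where d is its out-degree: each child of 0_1 creates k - 1 new such cliques.\<close>

lemma card_cliques:
  assumes "valid_tree k ts" "k \<ge> 1"
  shows "finite (cliques k ts) \<and> card (cliques k ts) = 1 + k * length ts"
  using assms
proof (induction rule: valid_tree.induct)
  case Nil
  then show ?case by (simp add: cliques_Nil)
next
  case (snoc ts K p)
  have fin: "finite K" "card K = k" using clique_props[OF snoc(1) snoc.prems snoc(2)] by auto
  have ci: "card ((\<lambda>w. insert (Node (Suc (length ts))) (K - {w})) ` K) = k"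
    using card_image[OF new_cliques_inj[OF snoc(1) snoc.prems snoc(2)]] fin by simp
  show ?case unfolding cliques_snoc
    using snoc.IH snoc.prems fin ci new_cliques_disjoint[OF snoc(1) snoc.prems, of K]
    by (simp add: card_Un_disjoint)
qed

lemma card_root_cliques:
  assumes "valid_tree k ts" "k \<ge> 1"
  shows "card {C \<in> cliques k ts. Root 1 \<in> C} = 1 + (k - 1) * root_outdeg ts"
  using assms
proof (induction rule: valid_tree.induct)
  case Nil
  then have "Root 1 \<in> root_clique k" by (auto simp: root_clique_def)
  then have "{C \<in> cliques k []. Root 1 \<in> C} = {root_clique k}" by (auto simp: cliques_Nil)
  then show ?case by (simp add: root_outdeg_def)
next
  case (snoc ts K p)
  let ?f = "\<lambda>w. insert (Node (Suc (length ts))) (K - {w})"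
  let ?W = "{w \<in> K. Root 1 \<in> K \<and> w \<noteq> Root 1}"
  have fin: "finite K" "card K = k" using clique_props[OF snoc(1) snoc.prems snoc(2)] by auto
  have fc: "finite (cliques k ts)" using card_cliques[OF snoc(1) snoc.prems] by simp
  have split: "{C \<in> cliques k ts \<union> ?f ` K. Root 1 \<in> C} = {C \<in> cliques k ts. Root 1 \<in> C} \<union> ?f ` ?W"
    by auto
  have inj: "inj_on ?f ?W"
    using new_cliques_inj[OF snoc(1) snoc.prems snoc(2)] by (rule inj_on_subset) auto
  have cW: "card ?W = (if Root 1 \<in> K then k - 1 else 0)"
  proof (cases "Root 1 \<in> K")
    case True
    then have "?W = K - {Root 1}" by auto
    then show ?thesis using True fin by (simp add: card_Diff_singleton)
  qed simp
  have disj: "{C \<in> cliques k ts. Root 1 \<in> C} \<inter> ?f ` ?W = {}"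
    using new_cliques_disjoint[OF snoc(1) snoc.prems, of K] by blast
  have "card {C \<in> cliques k (ts @ [(K, p)]). Root 1 \<in> C} = card {C \<in> cliques k ts. Root 1 \<in> C} + card ?W"
    unfolding cliques_snoc split
    by (subst card_Un_disjoint) (use fc fin disj card_image[OF inj] in auto)
  also have "\<dots> = 1 + (k - 1) * root_outdeg (ts @ [(K, p)])"
    using snoc.IH snoc.prems cW by (simp add: root_outdeg_snoc algebra_simps)
  finally show ?case .
qed

lemma sum_card_fibres:
  assumes "finite C" "finite I"
  shows "(\<Sum>K\<in>C. card {i\<in>I. f i = K}) = card {i\<in>I. f i \<in> C}"
  using assms(1)
proof (induction C rule: finite_induct)
  case (insert x F)
  have "{i\<in>I. f i \<in> insert x F} = {i\<in>I. f i = x} \<union> {i\<in>I. f i \<in> F}" by auto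
  moreover have "{i\<in>I. f i = x} \<inter> {i\<in>I. f i \<in> F} = {}" using insert by auto
  ultimately show ?case using insert assms(2) by (simp add: card_Un_disjoint)
qed simp

lemma parent_clique_in_cliques:
  assumes "valid_tree k ts"
  shows "\<forall>i<length ts. fst (ts ! i) \<in> cliques k ts"
  using assms
proof (induction rule: valid_tree.induct)
  case (snoc ts K p)
  then show ?case by (auto simp: cliques_snoc nth_append less_Suc_eq)
qed simp

lemma sum_outdeg_clique:
  assumes "valid_tree k ts" "k \<ge> 1" "C0 \<subseteq> cliques k ts"
  shows "(\<Sum>K\<in>C0. outdeg_clique ts K) = card {i. i < length ts \<and> fst (ts ! i) \<in> C0}"
proof -
  have "finite C0" using card_cliques[OF assms(1,2)] assms(3) finite_subset by blast
  from sum_card_fibres[OF this, of "{..<length ts}" "\<lambda>i. fst (ts ! i)"] show ?thesis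
    unfolding outdeg_clique_def by (simp add: lessThan_def conj_commute)
qed

definition insertions :: "nat \<Rightarrow> choice list \<Rightarrow> choice set" where
  "insertions k ts = {(K,p). K \<in> cliques k ts \<and> p \<le> outdeg_clique ts K}"

lemma card_insertions_into:
  assumes "valid_tree k ts" "k \<ge> 1" "C0 \<subseteq> cliques k ts"
  shows "card {(K,p). K \<in> C0 \<and> p \<le> outdeg_clique ts K}
       = card C0 + card {i. i < length ts \<and> fst (ts ! i) \<in> C0}"
proof -
  have fin: "finite C0" using card_cliques[OF assms(1,2)] assms(3) finite_subset by blast
  have "{(K,p). K \<in> C0 \<and> p \<le> outdeg_clique ts K} = Sigma C0 (\<lambda>K. {..outdeg_clique ts K})" by auto
  then have "card {(K,p). K \<in> C0 \<and> p \<le> outdeg_clique ts K} = (\<Sum>K\<in>C0. outdeg_clique ts K + 1)"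
    using fin by (simp add: card_SigmaI)
  also have "\<dots> = card C0 + (\<Sum>K\<in>C0. outdeg_clique ts K)" by (simp add: sum_Suc)
  finally show ?thesis using sum_outdeg_clique[OF assms] by simp
qed

lemma card_insertions:
  assumes "valid_tree k ts" "k \<ge> 1"
  shows "card (insertions k ts) = 1 + (k + 1) * length ts"
proof -
  have "card (insertions k ts) = card (cliques k ts) + card {i. i < length ts \<and> fst (ts ! i) \<in> cliques k ts}"
    unfolding insertions_def by (rule card_insertions_into[OF assms]) simp
  also have "{i. i < length ts \<and> fst (ts ! i) \<in> cliques k ts} = {..<length ts}"
    using parent_clique_in_cliques[OF assms(1)] by auto
  finally show ?thesis using card_cliques[OF assms] by simp
qed

lemma finite_insertions: "valid_tree k ts \<Longrightarrow> k \<ge> 1 \<Longrightarrow> finite (insertions k ts)"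
  using card_insertions[of k ts] by (intro card_ge_0_finite) auto

lemma card_root_insertions:
  assumes "valid_tree k ts" "k \<ge> 1"
  shows "card {x \<in> insertions k ts. Root 1 \<in> fst x} = 1 + k * root_outdeg ts"
proof -
  let ?R = "{C \<in> cliques k ts. Root 1 \<in> C}"
  have "{x \<in> insertions k ts. Root 1 \<in> fst x} = {(K,p). K \<in> ?R \<and> p \<le> outdeg_clique ts K}"
    unfolding insertions_def by auto
  also have "card \<dots> = card ?R + card {i. i < length ts \<and> fst (ts ! i) \<in> ?R}"
    by (rule card_insertions_into[OF assms]) auto
  also have "{i. i < length ts \<and> fst (ts ! i) \<in> ?R} = {i. i < length ts \<and> Root 1 \<in> fst (ts ! i)}"
    using parent_clique_in_cliques[OF assms(1)] by auto
  finally show ?thesis using card_root_cliques[OF assms] assms(2)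
    unfolding root_outdeg_def by (simp add: algebra_simps)
qed

lemma card_nonroot_insertions:
  assumes "valid_tree k ts" "k \<ge> 1"
  shows "k * root_outdeg ts + card {x \<in> insertions k ts. Root 1 \<notin> fst x} = (k + 1) * length ts"
proof -
  have "card {x \<in> insertions k ts. Root 1 \<in> fst x} + card {x \<in> insertions k ts. Root 1 \<notin> fst x}
      = card (insertions k ts)"
    using finite_insertions[OF assms]
    by (subst card_Un_disjoint[symmetric]) (auto intro: arg_cong[where f=card])
  then show ?thesis using card_insertions[OF assms] card_root_insertions[OF assms] by simp
qed

lemma valid_snoc_iff:
  "valid_tree k (ts @ [x]) \<longleftrightarrow> valid_tree k ts \<and> x \<in> insertions k ts"
proof
  assume "valid_tree k (ts @ [x])"
  then show "valid_tree k ts \<and> x \<in> insertions k ts"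
    by (cases rule: valid_tree.cases) (auto simp: insertions_def)
next
  assume "valid_tree k ts \<and> x \<in> insertions k ts"
  then show "valid_tree k (ts @ [x])"
    by (cases x) (auto simp: insertions_def intro: valid_tree.snoc)
qed

lemma trees_0: "trees k 0 = {[]}"
  by (auto simp: trees_def intro: valid_tree.Nil)

lemma trees_Suc:
  "trees k (Suc n) = (\<lambda>(ts,x). ts @ [x]) ` (SIGMA ts:trees k n. insertions k ts)"
proof (intro equalityI subsetI)
  fix ts' assume "ts' \<in> trees k (Suc n)"
  then have v: "valid_tree k ts'" and l: "length ts' = Suc n" by (auto simp: trees_def)
  then have e: "ts' = butlast ts' @ [last ts']"
    by (metis append_butlast_last_id list.size(3) nat.simps(3))
  with v have "valid_tree k (butlast ts') \<and> last ts' \<in> insertions k (butlast ts')"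
    by (metis valid_snoc_iff)
  with l e show "ts' \<in> (\<lambda>(ts,x). ts @ [x]) ` (SIGMA ts:trees k n. insertions k ts)"
    by (intro image_eqI[of _ _ "(butlast ts', last ts')"]) (auto simp: trees_def)
next
  fix ts' assume "ts' \<in> (\<lambda>(ts,x). ts @ [x]) ` (SIGMA ts:trees k n. insertions k ts)"
  then show "ts' \<in> trees k (Suc n)" by (auto simp: trees_def valid_snoc_iff)
qed

lemma inj_snoc: "inj_on (\<lambda>(ts,x). ts @ [x]) A"
  by (rule inj_onI) auto

lemma card_trees:
  assumes "k \<ge> 1"
  shows "finite (trees k n) \<and> card (trees k n) = (\<Prod>j<n. 1 + (k + 1) * j)"
proof (induction n)
  case 0
  then show ?case by (simp add: trees_0)
next
  case (Suc n)
  have ts: "\<And>ts. ts \<in> trees k n \<Longrightarrow> valid_tree k ts \<and> length ts = n" by (simp add: trees_def)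
  have fin: "finite (SIGMA ts:trees k n. insertions k ts)"
    using Suc.IH finite_insertions ts assms by (intro finite_SigmaI) auto
  have "card (trees k (Suc n)) = card (SIGMA ts:trees k n. insertions k ts)"
    unfolding trees_Suc by (rule card_image[OF inj_snoc])
  also have "\<dots> = (\<Sum>ts\<in>trees k n. card (insertions k ts))"
    using Suc.IH finite_insertions ts assms by (intro card_SigmaI) auto
  also have "\<dots> = (\<Sum>ts\<in>trees k n. 1 + (k + 1) * n)"
    using card_insertions ts assms by (intro sum.cong) auto
  finally show ?case using Suc.IH fin unfolding trees_Suc by (simp add: mult.commute)
qed

definition root_count :: "nat \<Rightarrow> nat \<Rightarrow> nat \<Rightarrow> nat" where
  "root_count k n m = card {ts \<in> trees k n. root_outdeg ts = m}"

lemma root_count_0: "root_count k 0 m = (if m = 0 then 1 else 0)"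
proof -
  have "{ts \<in> trees k 0. root_outdeg ts = m} = (if m = 0 then {[]} else {})"
    by (auto simp: trees_0 root_outdeg_def)
  then show ?thesis by (simp add: root_count_def)
qed

lemma card_insertions_reaching:
  assumes "valid_tree k ts" "k \<ge> 1"
  shows "real (card {x \<in> insertions k ts. root_outdeg (ts @ [x]) = m}) =
     (if root_outdeg ts = m then real ((k + 1) * length ts) - real k * real m else 0)
     + (if Suc (root_outdeg ts) = m then real (1 + k * root_outdeg ts) else 0)"
proof -
  let ?F = "{x \<in> insertions k ts. root_outdeg (ts @ [x]) = m}"
  note snoc = root_outdeg_snoc[of ts]
  consider (same) "root_outdeg ts = m" | (up) "Suc (root_outdeg ts) = m"
    | (none) "root_outdeg ts \<noteq> m" "Suc (root_outdeg ts) \<noteq> m" by blast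
  then show ?thesis
  proof cases
    case same
    then have "?F = {x \<in> insertions k ts. Root 1 \<notin> fst x}" by (auto simp: snoc)
    moreover have "real (k * m) + real (card {x \<in> insertions k ts. Root 1 \<notin> fst x}) = real ((k + 1) * length ts)"
      using card_nonroot_insertions[OF assms] same by (metis of_nat_add)
    ultimately show ?thesis using same by simp
  next
    case up
    then have "?F = {x \<in> insertions k ts. Root 1 \<in> fst x}" by (auto simp: snoc)
    then show ?thesis using up card_root_insertions[OF assms] by auto
  next
    case none
    then have "?F = {}" by (auto simp: snoc)
    then show ?thesis using none by (simp only: card.empty) simp
  qed
qed

lemma root_count_Suc:
  assumes "k \<ge> 1"
  shows "real (root_count k (Suc n) m) = real (root_count k n m) * (real ((k + 1) * n) - real k * real m)
     + (if m = 0 then 0 else real (root_count k n (m - 1)) * (1 + real k * (real m - 1)))"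
proof -
  let ?F = "\<lambda>ts. {x \<in> insertions k ts. root_outdeg (ts @ [x]) = m}"
  have ts: "\<And>ts. ts \<in> trees k n \<Longrightarrow> valid_tree k ts \<and> length ts = n" by (simp add: trees_def)
  have finT: "finite (trees k n)" using card_trees[OF assms] by simp
  have "{ts' \<in> trees k (Suc n). root_outdeg ts' = m} = (\<lambda>(ts,x). ts @ [x]) ` (SIGMA ts:trees k n. ?F ts)"
    unfolding trees_Suc by auto
  then have "root_count k (Suc n) m = card (SIGMA ts:trees k n. ?F ts)"
    unfolding root_count_def by (simp add: card_image[OF inj_snoc])
  also have "\<dots> = (\<Sum>ts\<in>trees k n. card (?F ts))"
    using finT finite_insertions ts assms by (intro card_SigmaI) auto
  finally have "real (root_count k (Suc n) m) = (\<Sum>ts\<in>trees k n. real (card (?F ts)))" by simp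
  also have "\<dots> = (\<Sum>ts\<in>trees k n. (if root_outdeg ts = m then real ((k + 1) * n) - real k * real m else 0))
      + (\<Sum>ts\<in>trees k n. (if Suc (root_outdeg ts) = m then real (1 + k * root_outdeg ts) else 0))"
    unfolding sum.distrib[symmetric] using card_insertions_reaching ts assms by (intro sum.cong) auto
  also have "(\<Sum>ts\<in>trees k n. (if root_outdeg ts = m then real ((k + 1) * n) - real k * real m else 0))
      = real (root_count k n m) * (real ((k + 1) * n) - real k * real m)"
    unfolding root_count_def using finT by (simp add: sum.inter_filter[symmetric])
  also have "(\<Sum>ts\<in>trees k n. (if Suc (root_outdeg ts) = m then real (1 + k * root_outdeg ts) else 0))
      = (if m = 0 then 0 else real (root_count k n (m - 1)) * (1 + real k * (real m - 1)))"
  proof (cases m)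
    case (Suc m')
    have "(\<Sum>ts\<in>trees k n. (if Suc (root_outdeg ts) = m then real (1 + k * root_outdeg ts) else 0))
        = (\<Sum>ts\<in>{ts \<in> trees k n. root_outdeg ts = m'}. real (1 + k * m'))"
      using finT Suc by (subst sum.inter_filter) (auto intro!: sum.cong)
    then show ?thesis using Suc by (simp add: root_count_def algebra_simps)
  qed simp
  finally show ?thesis .
qed

text \<open>The law of the root out-degree, defined by its recurrence: the n-th node becomes a
  child of 0_1 with probability (1 + k d)/(1 + (k+1)(n-1)) if 0_1 has out-degree d.\<close>

fun root_prob :: "nat \<Rightarrow> nat \<Rightarrow> nat \<Rightarrow> real" where
  "root_prob k 0 m = (if m = 0 then 1 else 0)"
| "root_prob k (Suc n) m = root_prob k n m * (1 - (1 + real k * real m) / (1 + (real k + 1) * real n))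
     + (if m = 0 then 0 else root_prob k n (m - 1) * (1 + real k * (real m - 1)) / (1 + (real k + 1) * real n))"

lemma pmf_root_outdeg_count:
  assumes "k \<ge> 1"
  shows "pmf (map_pmf root_outdeg (random_tree k n)) m = real (root_count k n m) / real (card (trees k n))"
proof -
  have "trees k n \<noteq> {}" using card_trees[OF assms, of n] by auto
  then have "pmf (map_pmf root_outdeg (random_tree k n)) m
      = real (card (trees k n \<inter> root_outdeg -` {m})) / real (card (trees k n))"
    unfolding random_tree_def using card_trees[OF assms]
    by (simp add: pmf_map measure_pmf_of_set)
  also have "trees k n \<inter> root_outdeg -` {m} = {ts \<in> trees k n. root_outdeg ts = m}" by auto
  finally show ?thesis by (simp add: root_count_def)
qed

lemma pmf_root_outdeg:
  assumes "k \<ge> 1"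
  shows "pmf (map_pmf root_outdeg (random_tree k n)) m = root_prob k n m"
proof (induction n arbitrary: m)
  case 0
  then show ?case using card_trees[OF assms, of 0] by (simp add: pmf_root_outdeg_count[OF assms] root_count_0)
next
  case (Suc n)
  define N where "N = real (card (trees k n))"
  define a where "a = 1 + (real k + 1) * real n"
  have "card (trees k n) > 0" using card_trees[OF assms, of n] by (auto intro!: prod_pos)
  then have N: "N > 0" by (simp add: N_def)
  have a: "a > 0" "real ((k + 1) * n) = a - 1" by (simp_all add: a_def add_pos_nonneg algebra_simps)
  have cS: "real (card (trees k (Suc n))) = N * a"
    using card_trees[OF assms, of "Suc n"] card_trees[OF assms, of n] by (simp add: N_def a_def algebra_simps)
  have IH: "real (root_count k n m) = root_prob k n m * N" for m
    using Suc.IH[of m] N by (simp add: pmf_root_outdeg_count[OF assms] N_def field_simps)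
  define X where "X = root_prob k n m * (a - 1 - real k * real m)
     + (if m = 0 then 0 else root_prob k n (m - 1) * (1 + real k * (real m - 1)))"
  have "real (root_count k (Suc n) m) = N * X"
    unfolding root_count_Suc[OF assms] IH X_def a(2) by (simp add: algebra_simps)
  then have "pmf (map_pmf root_outdeg (random_tree k (Suc n))) m = X / a"
    unfolding pmf_root_outdeg_count[OF assms] cS using N by simp
  also have "\<dots> = root_prob k (Suc n) m"
    using a(1) unfolding X_def root_prob.simps a_def[symmetric] by (simp add: field_simps)
  finally show ?case .
qed

definition root_coeff :: "nat \<Rightarrow> nat \<Rightarrow> real" where
  "root_coeff k m = (real m - (real k - 1) / real k) gchoose m"

definition size_coeff :: "nat \<Rightarrow> nat \<Rightarrow> real" where
  "size_coeff k n = (real n - real k / (real k + 1)) gchoose n"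

definition shifted_binom :: "nat \<Rightarrow> nat \<Rightarrow> nat \<Rightarrow> real" where
  "shifted_binom k n l = (real n - 1 - real k * real l / (real k + 1)) gchoose n"

definition alt_binom_sum :: "nat \<Rightarrow> nat \<Rightarrow> nat \<Rightarrow> real" where
  "alt_binom_sum k n m = (\<Sum>l = 0..m. real (m choose l) * (-1) ^ l * shifted_binom k n l)"

definition closed_form :: "nat \<Rightarrow> nat \<Rightarrow> nat \<Rightarrow> real" where
  "closed_form k n m = root_coeff k m / size_coeff k n * alt_binom_sum k n m"

lemma shifted_binom_Suc:
  "real (Suc n) * shifted_binom k (Suc n) l = (real n - real k * real l / (real k + 1)) * shifted_binom k n l"
  using gbinomial_absorption[of n "real n - real k * real l / (real k + 1)"]
  by (simp add: shifted_binom_def algebra_simps)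

lemma size_coeff_Suc:
  "real (Suc n) * size_coeff k (Suc n) = (real (Suc n) - real k / (real k + 1)) * size_coeff k n"
  using gbinomial_absorption[of n "real (Suc n) - real k / (real k + 1)"]
  by (simp add: size_coeff_def algebra_simps)

lemma root_coeff_Suc:
  "k \<ge> 1 \<Longrightarrow> real (Suc m) * root_coeff k (Suc m) = (real m + 1 / real k) * root_coeff k m"
  using gbinomial_absorption[of m "real (Suc m) - (real k - 1) / real k"]
  by (simp add: root_coeff_def algebra_simps diff_divide_distrib)

lemma size_coeff_pos: "size_coeff k n > 0"
proof (induction n)
  case 0
  then show ?case by (simp add: size_coeff_def)
next
  case (Suc n)
  have "real k / (real k + 1) < 1" by simp
  then have "real (Suc n) - real k / (real k + 1) > 0" by linarith
  with Suc size_coeff_Suc[of n k] show ?case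
    by (metis mult_pos_pos of_nat_0_less_iff zero_less_Suc zero_less_mult_pos)
qed

lemma alt_binom_sum_0: "alt_binom_sum k 0 m = (if m = 0 then 1 else 0)"
proof (cases "m = 0")
  case False
  then show ?thesis
    using choose_alternating_sum[of m, where 'a=real]
    by (simp add: alt_binom_sum_def shifted_binom_def atLeast0AtMost mult.commute)
qed (simp add: alt_binom_sum_def shifted_binom_def)

lemma closed_form_0: "closed_form k 0 m = (if m = 0 then 1 else 0)"
  by (simp add: closed_form_def alt_binom_sum_0 root_coeff_def size_coeff_def)

lemma alt_binom_sum_absorb:
  assumes "m \<ge> 1"
  shows "(\<Sum>l = 0..m. real (m choose l) * (real m - real l) * (-1) ^ l * shifted_binom k n l)
       = real m * alt_binom_sum k n (m - 1)"
proof -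
  obtain m' where m': "m = Suc m'" using assms by (cases m) auto
  have "(\<Sum>l = 0..m. real (m choose l) * (real m - real l) * (-1) ^ l * shifted_binom k n l)
      = (\<Sum>l = 0..m. real m * (real (m' choose l) * (-1) ^ l * shifted_binom k n l))"
  proof (rule sum.cong[OF refl])
    fix l assume "l \<in> {0..m}"
    then have "real m - real l = real (m - l)" by simp
    moreover have "real (m - l) * real (m choose l) = real m * real (m' choose l)"
      using binomial_absorb_comp[of m l] m' by (metis diff_Suc_1 of_nat_mult)
    ultimately show "real (m choose l) * (real m - real l) * (-1) ^ l * shifted_binom k n l
      = real m * (real (m' choose l) * (-1) ^ l * shifted_binom k n l)"
      by (metis (no_types, lifting) mult.assoc mult.commute)
  qed
  also have "\<dots> = real m * (\<Sum>l = 0..m. real (m' choose l) * (-1) ^ l * shifted_binom k n l)"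
    by (rule sum_distrib_left[symmetric])
  also have "(\<Sum>l = 0..m. real (m' choose l) * (-1) ^ l * shifted_binom k n l) = alt_binom_sum k n m'"
    unfolding m' alt_binom_sum_def by (subst sum.atLeast0_atMost_Suc) simp
  finally show ?thesis using m' by simp
qed

lemma alt_binom_sum_Suc:
  "real (Suc n) * alt_binom_sum k (Suc n) m = (real n - real k / (real k + 1) * real m) * alt_binom_sum k n m
     + (if m = 0 then 0 else real k / (real k + 1) * real m * alt_binom_sum k n (m - 1))"
proof -
  let ?c = "real k / (real k + 1)"
  have "real (Suc n) * alt_binom_sum k (Suc n) m
      = (\<Sum>l = 0..m. real (m choose l) * (-1) ^ l * (real (Suc n) * shifted_binom k (Suc n) l))"
    unfolding alt_binom_sum_def sum_distrib_left by (intro sum.cong) (simp_all add: algebra_simps)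
  also have "\<dots> = (\<Sum>l = 0..m. real (m choose l) * (-1) ^ l * ((real n - ?c * real m) * shifted_binom k n l
        + ?c * ((real m - real l) * shifted_binom k n l)))"
    unfolding shifted_binom_Suc by (intro sum.cong) (simp_all add: algebra_simps)
  also have "\<dots> = (real n - ?c * real m) * alt_binom_sum k n m
     + ?c * (\<Sum>l = 0..m. real (m choose l) * (real m - real l) * (-1) ^ l * shifted_binom k n l)"
    unfolding alt_binom_sum_def sum_distrib_left distrib_left sum.distrib by (simp add: algebra_simps)
  also have "(\<Sum>l = 0..m. real (m choose l) * (real m - real l) * (-1) ^ l * shifted_binom k n l)
     = (if m = 0 then 0 else real m * alt_binom_sum k n (m - 1))"
    using alt_binom_sum_absorb[of m k n] by simp
  finally show ?thesis by simp
qed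

lemma closed_form_Suc:
  assumes "k \<ge> 1"
  shows "closed_form k (Suc n) m = closed_form k n m * (1 - (1 + real k * real m) / (1 + (real k + 1) * real n))
     + (if m = 0 then 0 else closed_form k n (m - 1) * (1 + real k * (real m - 1)) / (1 + (real k + 1) * real n))"
proof -
  define c where "c = real k / (real k + 1)"
  define a where "a = 1 + (real k + 1) * real n"
  define d where "d = real n + 1 - c"
  have k1: "real k + 1 > 0" by simp
  have "c < 1" unfolding c_def by simp
  then have pos: "d > 0" unfolding d_def by simp
  have a: "a = (real k + 1) * d" unfolding a_def c_def d_def using k1 by (simp add: field_simps)
  have B: "size_coeff k n > 0" by (rule size_coeff_pos)
  have id1: "1 - (1 + real k * real m) / a = (real n - c * real m) / d"
  proof -
    have "a > 0" unfolding a_def by (simp add: add_pos_nonneg)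
    then have "1 - (1 + real k * real m) / a = (a - 1 - real k * real m) / a" by (simp add: field_simps)
    also have "a - 1 - real k * real m = (real k + 1) * (real n - c * real m)"
      unfolding a_def c_def using k1 by (simp add: field_simps)
    finally show ?thesis unfolding a using k1 pos by simp
  qed
  have id2: "real k / a = c / d" unfolding a c_def using k1 pos by simp
  have Bs: "size_coeff k (Suc n) = d * size_coeff k n / real (Suc n)"
    using size_coeff_Suc[of n k] unfolding d_def c_def by (simp add: eq_divide_eq mult.commute)
  have Ss: "alt_binom_sum k (Suc n) m = ((real n - c * real m) * alt_binom_sum k n m
      + (if m = 0 then 0 else c * real m * alt_binom_sum k n (m - 1))) / real (Suc n)"
    using alt_binom_sum_Suc[of n k m] unfolding c_def[symmetric] by (simp add: eq_divide_eq mult.commute del: of_nat_Suc)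
  have FS: "closed_form k (Suc n) m = root_coeff k m / size_coeff k n * (((real n - c * real m) * alt_binom_sum k n m
      + (if m = 0 then 0 else c * real m * alt_binom_sum k n (m - 1))) / d)"
    unfolding closed_form_def Bs Ss using B pos by (simp del: of_nat_Suc)
  show ?thesis
  proof (cases "m = 0")
    case True
    show ?thesis unfolding FS a_def[symmetric] id1 using True by (simp add: closed_form_def)
  next
    case False
    then obtain m' where m': "m = Suc m'" by (cases m) auto
    have Am: "root_coeff k (m - 1) * (1 + real k * (real m - 1)) = real k * real m * root_coeff k m"
      using root_coeff_Suc[OF assms, of m'] assms m' by (simp add: field_simps)
    have "closed_form k n (m - 1) * (1 + real k * (real m - 1)) / a
        = (root_coeff k (m - 1) * (1 + real k * (real m - 1))) / size_coeff k n * alt_binom_sum k n (m - 1) / a"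
      unfolding closed_form_def by simp
    also have "\<dots> = root_coeff k m / size_coeff k n * (real m * alt_binom_sum k n (m - 1)) * (real k / a)"
      unfolding Am by simp
    finally have "closed_form k n (m - 1) * (1 + real k * (real m - 1)) / a
        = root_coeff k m / size_coeff k n * (c * real m * alt_binom_sum k n (m - 1) / d)"
      unfolding id2 by simp
    then show ?thesis unfolding FS a_def[symmetric] id1 using False
      by (simp add: closed_form_def add_divide_distrib distrib_left)
  qed
qed

lemma root_prob_closed_form:
  assumes "k \<ge> 1"
  shows "root_prob k n m = closed_form k n m"
  by (induction n arbitrary: m) (simp_all add: closed_form_0 closed_form_Suc[OF assms])

definition expect_root :: "nat \<Rightarrow> nat \<Rightarrow> (nat \<Rightarrow> real) \<Rightarrow> real" where
  "expect_root k n f = (\<Sum>d\<le>n. root_prob k n d * f d)"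

lemma root_prob_beyond: "d > n \<Longrightarrow> root_prob k n d = 0"
  by (induction n arbitrary: d) auto

lemma expect_root_Suc:
  "expect_root k (Suc n) f = (\<Sum>d\<le>n. root_prob k n d * (f d * (1 - (1 + real k * real d) / (1 + (real k + 1) * real n))
      + f (Suc d) * ((1 + real k * real d) / (1 + (real k + 1) * real n))))"
proof -
  let ?A = "1 + (real k + 1) * real n"
  have "expect_root k (Suc n) f = (\<Sum>d\<le>Suc n. root_prob k n d * (1 - (1 + real k * real d) / ?A) * f d)
     + (\<Sum>d\<le>Suc n. (if d = 0 then 0 else root_prob k n (d - 1) * (1 + real k * (real d - 1)) / ?A) * f d)"
    unfolding expect_root_def root_prob.simps by (simp add: sum.distrib[symmetric] algebra_simps)
  also have "(\<Sum>d\<le>Suc n. root_prob k n d * (1 - (1 + real k * real d) / ?A) * f d)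
      = (\<Sum>d\<le>n. root_prob k n d * (1 - (1 + real k * real d) / ?A) * f d)"
    by (simp add: root_prob_beyond)
  also have "(\<Sum>d\<le>Suc n. (if d = 0 then 0 else root_prob k n (d - 1) * (1 + real k * (real d - 1)) / ?A) * f d)
      = (\<Sum>d\<le>n. root_prob k n d * (1 + real k * real d) / ?A * f (Suc d))"
    by (subst sum.atMost_Suc_shift) simp
  finally show ?thesis by (simp add: sum.distrib[symmetric] algebra_simps)
qed

lemma expect_root_const: "expect_root k n (\<lambda>_. 1) = 1"
proof (induction n)
  case 0
  then show ?case by (simp add: expect_root_def)
next
  case (Suc n)
  then show ?case unfolding expect_root_Suc by (simp add: expect_root_def algebra_simps)
qed

lemma expect_root_mono:
  assumes "k \<ge> 1" "\<And>d. d \<le> n \<Longrightarrow> f d \<le> g d"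
  shows "expect_root k n f \<le> expect_root k n g"
proof -
  have "root_prob k n d \<ge> 0" for d using pmf_root_outdeg[OF assms(1), of n d] by (metis pmf_nonneg)
  then show ?thesis unfolding expect_root_def using assms(2) by (intro sum_mono mult_left_mono) auto
qed

lemma expect_root_linear:
  "expect_root k n (\<lambda>d. a * f d + b * g d) = a * expect_root k n f + b * expect_root k n g"
  unfolding expect_root_def by (simp add: sum.distrib sum_distrib_left algebra_simps)

text \<open>The rising moments E (Y_n + 1/k)^(s) are the natural moments of this process: each
  step multiplies them by 1 + k s/(1 + (k+1) n), which gives a product formula.\<close>

definition rising_moment :: "nat \<Rightarrow> nat \<Rightarrow> nat \<Rightarrow> real" where
  "rising_moment k n s = expect_root k n (\<lambda>d. pochhammer (real d + 1 / real k) s)"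

lemma pochhammer_step:
  "pochhammer (x + 1) (Suc s) - pochhammer x (Suc s) = real (Suc s) * pochhammer (x + 1) s"
  by (simp only: pochhammer_rec'[of "x + 1"] pochhammer_rec[of x]) (simp add: algebra_simps)

lemma rising_moment_Suc:
  assumes "k \<ge> 1"
  shows "rising_moment k (Suc n) s = rising_moment k n s * (1 + real k * real s / (1 + (real k + 1) * real n))"
proof (cases s)
  case 0
  then show ?thesis using expect_root_const by (simp add: rising_moment_def)
next
  case (Suc s')
  let ?A = "1 + (real k + 1) * real n"
  have "pochhammer (real d + 1 / real k) s * (1 - (1 + real k * real d) / ?A)
      + pochhammer (real (Suc d) + 1 / real k) s * ((1 + real k * real d) / ?A)
      = pochhammer (real d + 1 / real k) s * (1 + real k * real s / ?A)" for d
  proof -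
    let ?x = "real d + 1 / real k"
    have kx: "1 + real k * real d = real k * ?x" using assms by (simp add: field_simps)
    have rec: "?x * pochhammer (?x + 1) s' = pochhammer ?x s" using Suc by (simp add: pochhammer_rec)
    have "pochhammer (?x + 1) s - pochhammer ?x s = real s * pochhammer (?x + 1) s'"
      using pochhammer_step[of ?x s'] Suc by simp
    moreover have e: "real (Suc d) + 1 / real k = ?x + 1" by simp
    ultimately have step: "pochhammer (real (Suc d) + 1 / real k) s = pochhammer ?x s + real s * pochhammer (?x + 1) s'"
      by (simp only: e)
    have absorb: "P * (1 - k' * x / A) + (P + s0 * Q) * (k' * x / A) = P * (1 + k' * s0 / A)"
      if "x * Q = P" for P Q x k' s0 A :: real
      using that[symmetric] by (simp add: algebra_simps add_divide_distrib)
    show ?thesis unfolding step kx by (rule absorb) (rule rec)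
  qed
  then show ?thesis unfolding rising_moment_def expect_root_Suc by (simp add: expect_root_def sum_distrib_right mult.assoc)
qed

lemma rising_moment_closed:
  assumes "k \<ge> 1"
  shows "rising_moment k n s = pochhammer (1 / real k) s
      * pochhammer (1 / (real k + 1) + real k / (real k + 1) * real s) n / pochhammer (1 / (real k + 1)) n"
proof (induction n)
  case 0
  then show ?case by (simp add: rising_moment_def expect_root_def)
next
  case (Suc n)
  have k1: "real k + 1 > 0" by simp
  have b: "1 / (real k + 1) + real n > 0" by (simp add: add_pos_nonneg)
  have A: "1 + (real k + 1) * real n > 0" by (simp add: add_pos_nonneg)
  have e1: "1 / (real k + 1) + real k / (real k + 1) * real s + real n
      = (1 + (real k + 1) * real n + real k * real s) / (real k + 1)"
    using k1 by (simp add: field_simps)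
  have e2: "1 / (real k + 1) + real n = (1 + (real k + 1) * real n) / (real k + 1)"
    using k1 by (simp add: field_simps)
  have r: "1 + real k * real s / (1 + (real k + 1) * real n)
      = (1 / (real k + 1) + real k / (real k + 1) * real s + real n) / (1 / (real k + 1) + real n)"
    unfolding e1 e2 using k1 A b by (simp add: add_divide_distrib distrib_left)
  show ?case unfolding rising_moment_Suc[OF assms] Suc r pochhammer_rec'
    by (simp only: times_divide_times_eq mult_ac)
qed

lemma pochhammer_Gamma_series:
  fixes z :: real
  assumes "z > 0" "n > 0"
  shows "pochhammer z n = fact n * real n powr z / Gamma_series z n / (z + real n)"
proof -
  have p1: "pochhammer z (n + 1) > 0" "pochhammer z n > 0" using assms by (simp_all add: pochhammer_pos)
  have "Gamma_series z n = fact n * real n powr z / pochhammer z (n + 1)"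
    using assms by (simp add: Gamma_series_def powr_def)
  moreover have "pochhammer z (n + 1) = (z + real n) * pochhammer z n" by (simp add: pochhammer_rec')
  moreover have G: "Gamma_series z n > 0" using assms p1 unfolding Gamma_series_def powr_def by simp
  ultimately have e: "pochhammer z n * ((z + real n) * Gamma_series z n) = fact n * real n powr z"
    using p1 by (simp add: field_simps)
  have "(z + real n) * Gamma_series z n \<noteq> 0" using G assms by simp
  then have "pochhammer z n = fact n * real n powr z / ((z + real n) * Gamma_series z n)"
    using e by (simp add: eq_divide_eq)
  then show ?thesis by (simp add: divide_divide_eq_left mult.commute)
qed

lemma pochhammer_ratio_lim:
  fixes a b :: real
  assumes "a > 0" "b > 0"
  shows "(\<lambda>n. pochhammer a n / pochhammer b n / real n powr (a - b)) \<longlonglongrightarrow> Gamma b / Gamma a"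
proof -
  have ev: "eventually (\<lambda>n. pochhammer a n / pochhammer b n / real n powr (a - b)
      = Gamma_series b n / Gamma_series a n * ((b + real n) / (a + real n))) sequentially"
    using eventually_gt_at_top[of "0::nat"]
  proof eventually_elim
    case (elim n)
    have gs: "Gamma_series z n > 0" if "z > 0" for z :: real
      using that elim by (simp add: Gamma_series_def pochhammer_pos)
    have cancel: "(F * P / Ga / u) / (F * Q / Gb / v) / R = Gb / Ga * (v / u)"
      if "F > 0" "Q > 0" "R > 0" "Ga > 0" "Gb > 0" "u > 0" "v > 0" "Q * R = P" for F P Q R Ga Gb u v :: real
    proof -
      have "P \<noteq> 0" using that by (metis mult_pos_pos less_irrefl)
      then show ?thesis using that by (simp add: field_simps)
    qed
    have "real n powr b * real n powr (a - b) = real n powr a"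
      using elim by (simp add: powr_add[symmetric])
    then show ?case unfolding pochhammer_Gamma_series[OF assms(1) elim] pochhammer_Gamma_series[OF assms(2) elim]
      using gs[OF assms(1)] gs[OF assms(2)] elim assms
      by (intro cancel) (auto simp: add_pos_nonneg)
  qed
  have r: "(\<lambda>n. (b + real n) / (a + real n)) \<longlonglongrightarrow> 1"
    using assms(1) by real_asymp
  have "(\<lambda>n. Gamma_series b n / Gamma_series a n * ((b + real n) / (a + real n))) \<longlonglongrightarrow> Gamma b / Gamma a * 1"
    using assms by (intro tendsto_intros Gamma_series_LIMSEQ r) (simp add: Gamma_real_pos[THEN less_imp_neq, symmetric])
  then show ?thesis using ev by (simp add: tendsto_cong)
qed

definition gamma_moment :: "nat \<Rightarrow> nat \<Rightarrow> real" where
  "gamma_moment k s = Gamma (1 / (real k + 1)) * Gamma (real s + 1 / real k)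
      / (Gamma (1 / real k) * Gamma (real k / (real k + 1) * real s + 1 / (real k + 1)))"

lemma gamma_moment_pos: "k \<ge> 1 \<Longrightarrow> gamma_moment k s > 0"
  unfolding gamma_moment_def by (intro divide_pos_pos mult_pos_pos Gamma_real_pos) (auto intro!: add_nonneg_pos)

lemma rising_moment_lim:
  assumes "k \<ge> 1"
  shows "(\<lambda>n. rising_moment k n s / real n powr (real k / (real k + 1) * real s)) \<longlonglongrightarrow> gamma_moment k s"
proof -
  define b where "b = 1 / (real k + 1)"
  define a where "a = b + real k / (real k + 1) * real s"
  have b: "b > 0" unfolding b_def by simp
  have a: "a > 0" unfolding a_def using b by (simp add: add_pos_nonneg)
  have ab: "a - b = real k / (real k + 1) * real s" unfolding a_def by simp
  have "(\<lambda>n. pochhammer (1 / real k) s * (pochhammer a n / pochhammer b n / real n powr (a - b)))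
     \<longlonglongrightarrow> pochhammer (1 / real k) s * (Gamma b / Gamma a)"
    by (intro tendsto_intros pochhammer_ratio_lim a b)
  moreover have "pochhammer (1 / real k) s = Gamma (real s + 1 / real k) / Gamma (1 / real k)"
    using assms by (subst pochhammer_Gamma) (auto simp: add.commute dest!: nonpos_Ints_nonpos)
  moreover have "rising_moment k n s / real n powr (real k / (real k + 1) * real s)
     = pochhammer (1 / real k) s * (pochhammer a n / pochhammer b n / real n powr (a - b))" for n
    unfolding rising_moment_closed[OF assms] ab by (simp add: a_def b_def)
  ultimately show ?thesis unfolding gamma_moment_def by (simp add: a_def b_def add.commute mult_ac)
qed

lemma power_diff_le:
  fixes a b :: real
  assumes "0 \<le> b" "b \<le> a"
  shows "a ^ n - b ^ n \<le> real n * (a - b) * a ^ (n - 1)"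
proof (induction n)
  case (Suc n)
  have "a ^ Suc n - b ^ Suc n = a * (a ^ n - b ^ n) + b ^ n * (a - b)" by (simp add: algebra_simps)
  also have "\<dots> \<le> a * (real n * (a - b) * a ^ (n - 1)) + a ^ n * (a - b)"
    using assms Suc by (intro add_mono mult_left_mono mult_right_mono power_mono) auto
  also have "\<dots> = real (Suc n) * (a - b) * a ^ n"
    by (cases n) (simp_all add: algebra_simps)
  finally show ?case by simp
qed simp

lemma power_le_pochhammer:
  assumes "x \<ge> 0" "k \<ge> 1"
  shows "x ^ s \<le> pochhammer (x + 1 / real k) s"
proof -
  have "x ^ s = (\<Prod>i\<in>{0..<s}. x)" by simp
  also have "\<dots> \<le> (\<Prod>i\<in>{0..<s}. x + 1 / real k + real i)"
    using assms by (intro prod_mono) auto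
  finally show ?thesis by (simp add: pochhammer_prod)
qed

lemma pochhammer_le_power:
  assumes "x \<ge> 0" "k \<ge> 1"
  shows "pochhammer (x + 1 / real k) s \<le> (x + real s) ^ s"
proof -
  have "pochhammer (x + 1 / real k) s = (\<Prod>i\<in>{0..<s}. x + 1 / real k + real i)" by (simp add: pochhammer_prod)
  also have "\<dots> \<le> (\<Prod>i\<in>{0..<s}. x + real s)"
  proof (intro prod_mono conjI)
    fix i assume "i \<in> {0..<s}"
    then have "real i + 1 \<le> real s" by simp
    moreover have "1 / real k \<le> 1" using assms by simp
    ultimately show "x + 1 / real k + real i \<le> x + real s" by linarith
    show "0 \<le> x + 1 / real k + real i" using assms by simp
  qed
  finally show ?thesis by simp
qed

lemma pochhammer_power_gap:
  assumes "x \<ge> 0" "k \<ge> 1" "s \<ge> 1"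
  shows "pochhammer (x + 1 / real k) s - x ^ s
     \<le> real s * real s * real (s + 1) ^ (s - 1) * (pochhammer (x + 1 / real k) (s - 1) + 1)"
proof -
  have "x + real s \<le> real (s + 1) * max x 1"
  proof (cases "x \<le> 1")
    case False
    then have "real s \<le> x * real s" using mult_right_mono[of 1 x "real s"] by simp
    then show ?thesis using False by (simp add: max_def algebra_simps)
  qed (simp add: max_def)
  then have "(x + real s) ^ (s - 1) \<le> (real (s + 1) * max x 1) ^ (s - 1)"
    using assms by (intro power_mono) auto
  also have "\<dots> = real (s + 1) ^ (s - 1) * max x 1 ^ (s - 1)" by (simp add: power_mult_distrib)
  also have "\<dots> \<le> real (s + 1) ^ (s - 1) * (pochhammer (x + 1 / real k) (s - 1) + 1)"
  proof -
    have "max x 1 ^ (s - 1) \<le> x ^ (s - 1) + 1"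
      using assms(1) by (cases "x \<le> 1") (auto simp: max_def)
    then show ?thesis using power_le_pochhammer[OF assms(1,2), of "s - 1"] by (intro mult_left_mono) auto
  qed
  finally have bound: "(x + real s) ^ (s - 1) \<le> real (s + 1) ^ (s - 1) * (pochhammer (x + 1 / real k) (s - 1) + 1)" .
  have "pochhammer (x + 1 / real k) s - x ^ s \<le> (x + real s) ^ s - x ^ s"
    using pochhammer_le_power[OF assms(1,2)] by simp
  also have "\<dots> \<le> real s * real s * (x + real s) ^ (s - 1)"
    using power_diff_le[of x "x + real s" s] assms by simp
  also have "\<dots> \<le> real s * real s * (real (s + 1) ^ (s - 1) * (pochhammer (x + 1 / real k) (s - 1) + 1))"
    using bound by (intro mult_left_mono) auto
  finally show ?thesis by (simp add: algebra_simps)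
qed

definition power_moment :: "nat \<Rightarrow> nat \<Rightarrow> nat \<Rightarrow> real" where
  "power_moment k n s = expect_root k n (\<lambda>d. real d ^ s)"

lemma rising_power_moment_gap:
  assumes "k \<ge> 1" "s \<ge> 1"
  defines "C \<equiv> real s * real s * real (s + 1) ^ (s - 1)"
  shows "0 \<le> rising_moment k n s - power_moment k n s"
    and "rising_moment k n s - power_moment k n s \<le> C * (rising_moment k n (s - 1) + 1)"
proof -
  show "0 \<le> rising_moment k n s - power_moment k n s"
    unfolding rising_moment_def power_moment_def
    using expect_root_mono[OF assms(1), of n "\<lambda>d. real d ^ s"] power_le_pochhammer[OF _ assms(1)] by simp
  have "rising_moment k n s - power_moment k n s
      = expect_root k n (\<lambda>d. pochhammer (real d + 1 / real k) s - real d ^ s)"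
    unfolding rising_moment_def power_moment_def using expect_root_linear[of k n 1 _ "-1"] by simp
  also have "\<dots> \<le> expect_root k n (\<lambda>d. C * pochhammer (real d + 1 / real k) (s - 1) + C * 1)"
    by (intro expect_root_mono[OF assms(1)])
      (use pochhammer_power_gap[OF _ assms(1,2)] in \<open>auto simp: C_def algebra_simps\<close>)
  also have "\<dots> = C * (rising_moment k n (s - 1) + 1)"
    using expect_root_linear[of k n C _ C "\<lambda>_. 1"] expect_root_const[of k n]
    by (simp add: rising_moment_def algebra_simps)
  finally show "rising_moment k n s - power_moment k n s \<le> C * (rising_moment k n (s - 1) + 1)" .
qed

lemma power_moment_lim:
  assumes "k \<ge> 1"
  shows "(\<lambda>n. power_moment k n s / real n powr (real k / (real k + 1) * real s)) \<longlonglongrightarrow> gamma_moment k s"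
proof (cases "s = 0")
  case True
  then show ?thesis using rising_moment_lim[OF assms, of 0] by (simp add: power_moment_def rising_moment_def)
next
  case False
  define c where "c = real k / (real k + 1)"
  define C where "C = real s * real s * real (s + 1) ^ (s - 1)"
  define D where "D n = rising_moment k n s - power_moment k n s" for n
  have gap: "0 \<le> D n" "D n \<le> C * (rising_moment k n (s - 1) + 1)" for n
    using rising_power_moment_gap[OF assms, of s n] False unfolding C_def D_def by auto
  have lim: "(\<lambda>n. C * (rising_moment k n (s - 1) / real n powr (c * real (s - 1)) * real n powr (- c)
      + real n powr (- (c * real s)))) \<longlonglongrightarrow> C * (gamma_moment k (s - 1) * 0 + 0)"
    unfolding c_def using False assms
    by (intro tendsto_intros rising_moment_lim tendsto_neg_powr filterlim_real_sequentially) auto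
  have "(\<lambda>n. D n / real n powr (c * real s)) \<longlonglongrightarrow> 0"
  proof (rule Lim_null_comparison)
    show "(\<lambda>n. C * (rising_moment k n (s - 1) / real n powr (c * real (s - 1)) * real n powr (- c)
      + real n powr (- (c * real s)))) \<longlonglongrightarrow> 0"
      using lim by simp
    show "\<forall>\<^sub>F n in sequentially. norm (D n / real n powr (c * real s)) \<le> C * (rising_moment k n (s - 1)
        / real n powr (c * real (s - 1)) * real n powr (- c) + real n powr (- (c * real s)))"
      using eventually_gt_at_top[of "0::nat"]
    proof eventually_elim
      case (elim n)
      have p: "real n powr (c * real s) = real n powr (c * real (s - 1)) * real n powr c"
        using False by (simp add: powr_add[symmetric] of_nat_diff algebra_simps)
      have pp: "real n powr (c * real (s - 1)) > 0" "real n powr c > 0" using elim by auto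
      have "norm (D n / real n powr (c * real s)) = D n / real n powr (c * real s)"
        using gap(1)[of n] pp p by simp
      also have "\<dots> \<le> C * (rising_moment k n (s - 1) + 1) / real n powr (c * real s)"
        using gap(2)[of n] pp p by (intro divide_right_mono) auto
      also have "\<dots> = C * (rising_moment k n (s - 1) / real n powr (c * real (s - 1)) * real n powr (- c)
          + real n powr (- (c * real s)))"
        unfolding powr_minus using pp p by (simp add: field_simps)
      finally show ?case .
    qed
  qed
  from tendsto_diff[OF rising_moment_lim[OF assms, of s] this[unfolded c_def D_def]]
  show ?thesis by (simp add: diff_divide_distrib)
qed

definition scaled_moment :: "nat \<Rightarrow> nat \<Rightarrow> nat \<Rightarrow> real" where
  "scaled_moment k n s = expect_root k n (\<lambda>d. (real n powr (- (real k / (real k + 1))) * real d) ^ s)"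

lemma scaled_moment_lim:
  assumes "k \<ge> 1"
  shows "(\<lambda>n. scaled_moment k n s) \<longlonglongrightarrow> gamma_moment k s"
proof -
  have "eventually (\<lambda>n. power_moment k n s / real n powr (real k / (real k + 1) * real s)
      = scaled_moment k n s) sequentially"
    using eventually_gt_at_top[of "0::nat"]
  proof eventually_elim
    case (elim n)
    have "(real n powr (- (real k / (real k + 1)))) ^ s = real n powr (real s * (- (real k / (real k + 1))))"
      using elim by (intro powr_power) simp
    also have "\<dots> = inverse (real n powr (real k / (real k + 1) * real s))"
      by (simp add: powr_minus[symmetric] mult.commute)
    finally have "(real n powr (- (real k / (real k + 1)))) ^ s = inverse (real n powr (real k / (real k + 1) * real s))" .
    then have "(real n powr (- (real k / (real k + 1))) * real d) ^ s
        = real d ^ s / real n powr (real k / (real k + 1) * real s)" for d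
      by (simp add: power_mult_distrib divide_inverse mult.commute)
    then show ?case unfolding scaled_moment_def power_moment_def expect_root_def by (simp add: sum_divide_distrib)
  qed
  with power_moment_lim[OF assms, of s] show ?thesis by (simp add: tendsto_cong)
qed

text \<open>Log-convexity of Gamma bounds \<Gamma>(x)/\<Gamma>(x + c), which controls the growth of the moments.\<close>

lemma Gamma_shift_bound:
  fixes x c :: real
  assumes "x > 0" "0 < c" "c < 1"
  shows "x * Gamma x \<le> Gamma (x + c) * (x + c) powr (1 - c)"
proof -
  have xc: "x + c > 0" using assms by simp
  have "(ln \<circ> Gamma) ((1 - (1 - c)) *\<^sub>R (x + c) + (1 - c) *\<^sub>R (x + c + 1))
      \<le> (1 - (1 - c)) * (ln \<circ> Gamma) (x + c) + (1 - c) * (ln \<circ> Gamma) (x + c + 1)"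
    using assms by (intro convex_onD[OF log_convex_Gamma_real]) auto
  moreover have "(1 - (1 - c)) *\<^sub>R (x + c) + (1 - c) *\<^sub>R (x + c + 1) = x + 1"
    by (simp add: algebra_simps)
  moreover have "Gamma (x + c + 1) = (x + c) * Gamma (x + c)"
    using xc by (subst Gamma_plus1) (auto dest!: nonpos_Ints_nonpos)
  moreover have "Gamma (x + 1) = x * Gamma x"
    using assms by (subst Gamma_plus1) (auto dest!: nonpos_Ints_nonpos)
  ultimately have "ln (x * Gamma x) \<le> c * ln (Gamma (x + c)) + (1 - c) * ln ((x + c) * Gamma (x + c))"
    by simp
  also have "ln ((x + c) * Gamma (x + c)) = ln (x + c) + ln (Gamma (x + c))"
    using xc by (intro ln_mult_pos) auto
  also have "c * ln (Gamma (x + c)) + (1 - c) * (ln (x + c) + ln (Gamma (x + c)))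
      = ln (Gamma (x + c)) + (1 - c) * ln (x + c)"
    by (simp add: algebra_simps)
  also have "\<dots> = ln (Gamma (x + c) * (x + c) powr (1 - c))"
    using xc Gamma_real_pos[OF xc] by (simp add: ln_mult_pos ln_powr)
  finally show ?thesis using assms xc by simp
qed

lemma gamma_moment_ratio:
  fixes k s :: nat
  assumes "k \<ge> 1"
  defines "c \<equiv> real k / (real k + 1)" and "x \<equiv> real k / (real k + 1) * real s + 1 / (real k + 1)"
  shows "gamma_moment k (Suc s) \<le> gamma_moment k s * (real s + 1 / real k) * ((x + c) powr (1 - c) / x)"
proof -
  have c: "0 < c" "c < 1" unfolding c_def using assms by auto
  have x: "x > 0" unfolding x_def by (simp add: add_nonneg_pos)
  have k: "real s + 1 / real k > 0" using assms by (simp add: add_nonneg_pos)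
  have G1: "Gamma (real (Suc s) + 1 / real k) = (real s + 1 / real k) * Gamma (real s + 1 / real k)"
  proof -
    have "real s + 1 / real k \<notin> \<int>\<^sub>\<le>\<^sub>0" using k by (auto dest: nonpos_Ints_nonpos)
    from Gamma_plus1[OF this] show ?thesis by (simp add: algebra_simps)
  qed
  have G2: "real k / (real k + 1) * real (Suc s) + 1 / (real k + 1) = x + c"
    unfolding x_def c_def by (simp add: algebra_simps add_divide_distrib)
  have Gx: "Gamma x > 0" "Gamma (x + c) > 0" using x c by auto
  have gb: "Gamma x \<le> Gamma (x + c) * ((x + c) powr (1 - c) / x)"
    using Gamma_shift_bound[OF x c] x by (simp add: field_simps)
  have m0: "gamma_moment k s = Gamma (1 / (real k + 1)) * Gamma (real s + 1 / real k) / (Gamma (1 / real k) * Gamma x)"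
    unfolding gamma_moment_def x_def ..
  have m1: "gamma_moment k (Suc s) = Gamma (1 / (real k + 1)) * ((real s + 1 / real k) * Gamma (real s + 1 / real k))
      / (Gamma (1 / real k) * Gamma (x + c))"
    unfolding gamma_moment_def G1 G2 ..
  have gk: "Gamma (1 / real k) > 0" using assms by simp
  have "gamma_moment k (Suc s) = gamma_moment k s * (real s + 1 / real k) * (Gamma x / Gamma (x + c))"
    unfolding m0 m1 using Gx gk by (simp add: field_simps)
  also have "\<dots> \<le> gamma_moment k s * (real s + 1 / real k) * ((x + c) powr (1 - c) / x)"
    using gb Gx gamma_moment_pos[OF assms(1), of s] k by (intro mult_left_mono) (auto simp: field_simps)
  finally show ?thesis .
qed

text \<open>Since gamma_moment k (s+1) / gamma_moment k s = O(s^(1/(k+1))), the exponential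
  moment series converges for every t: the limit law is determined by its moments.\<close>

lemma gamma_moment_summable:
  assumes "k \<ge> 1"
  shows "summable (\<lambda>s. gamma_moment k s * \<bar>t\<bar> ^ s / fact s)"
proof -
  define c where "c = real k / (real k + 1)"
  define x where "x s = c * real s + 1 / (real k + 1)" for s :: nat
  define h where "h s = (x s + c) powr (1 - c) / x s" for s
  define T where "T = \<bar>t\<bar>"
  have c: "0 < c" "c < 1" unfolding c_def using assms by auto
  have x: "x s > 0" for s unfolding x_def using c by (simp add: add_nonneg_pos)
  have "(\<lambda>s. (c * real s + 1 / (real k + 1) + c) powr (1 - c) / (c * real s + 1 / (real k + 1))) \<longlonglongrightarrow> 0"
    using c by real_asymp
  then have "(\<lambda>s. T * h s) \<longlonglongrightarrow> T * 0" unfolding h_def x_def by (intro tendsto_intros)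
  from order_tendstoD(2)[OF this, of "1/2"] obtain N where N: "\<And>s. s \<ge> N \<Longrightarrow> T * h s < 1 / 2"
    by (auto simp: eventually_sequentially)
  have T: "T \<ge> 0" unfolding T_def by simp
  show ?thesis unfolding T_def[symmetric]
  proof (rule summable_ratio_test[of "1/2" N])
    fix s assume s: "s \<ge> N"
    have pos: "gamma_moment k j * T ^ j / fact j \<ge> 0" for j
      by (intro divide_nonneg_pos mult_nonneg_nonneg less_imp_le[OF gamma_moment_pos[OF assms(1)]] zero_le_power T) simp
    have r: "gamma_moment k (Suc s) \<le> gamma_moment k s * (real s + 1 / real k) * h s"
      using gamma_moment_ratio[OF assms(1), of s] unfolding h_def x_def c_def by (simp add: algebra_simps)
    have q: "(real s + 1 / real k) / real (Suc s) \<le> 1"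
      using assms(1) by (simp add: divide_le_eq_1 del: of_nat_Suc) (simp add: field_simps)
    have hpos: "h s \<ge> 0" unfolding h_def using x[of s] by simp
    have "gamma_moment k (Suc s) * T ^ Suc s / fact (Suc s)
        \<le> gamma_moment k s * (real s + 1 / real k) * h s * T ^ Suc s / fact (Suc s)"
      using r T by (intro divide_right_mono mult_right_mono) auto
    also have "\<dots> = (gamma_moment k s * T ^ s / fact s) * ((real s + 1 / real k) / real (Suc s)) * (T * h s)"
      by (simp add: field_simps)
    also have "\<dots> \<le> (gamma_moment k s * T ^ s / fact s) * 1 * (1 / 2)"
      using pos q N[OF s] hpos T by (intro mult_mono) auto
    finally show "norm (gamma_moment k (Suc s) * T ^ Suc s / fact (Suc s)) \<le> 1 / 2 * norm (gamma_moment k s * T ^ s / fact s)"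
      unfolding real_norm_def abs_of_nonneg[OF pos] by simp
  qed simp
qed

lemma abs_power_le_even_power: "\<bar>x::real\<bar> ^ j \<le> 1 + x ^ (2 * j)"
proof (cases "\<bar>x\<bar> \<le> 1")
  case True
  then have "\<bar>x\<bar> ^ j \<le> 1" by (simp add: power_le_one)
  moreover have "(0::real) \<le> x ^ (2 * j)" by (simp add: power_mult)
  ultimately show ?thesis by linarith
next
  case False
  then have "\<bar>x\<bar> ^ j \<le> \<bar>x\<bar> ^ (2 * j)" by (intro power_increasing) auto
  also have "\<bar>x\<bar> ^ (2 * j) = x ^ (2 * j)" by (simp add: power_abs[symmetric])
  finally show ?thesis by simp
qed

lemma truncation_power_error:
  fixes x R :: real
  assumes "R > 0"
  shows "\<bar>x ^ j - (max (- R) (min R x)) ^ j\<bar> \<le> 2 * x ^ (2 * j) / R ^ j"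
proof (cases "\<bar>x\<bar> \<le> R")
  case True
  then have "max (- R) (min R x) = x" by auto
  moreover have "0 \<le> 2 * x ^ (2 * j) / R ^ j" using assms by (simp add: power_mult)
  ultimately show ?thesis by simp
next
  case False
  define y where "y = max (- R) (min R x)"
  have y: "\<bar>y\<bar> \<le> R" unfolding y_def using assms by auto
  have Rj: "R ^ j > 0" using assms by simp
  have "\<bar>x ^ j - y ^ j\<bar> \<le> \<bar>x\<bar> ^ j + \<bar>y\<bar> ^ j" by (metis abs_triangle_ineq4 power_abs)
  also have "\<bar>y\<bar> ^ j \<le> \<bar>x\<bar> ^ j" using y False by (intro power_mono) auto
  also have "\<bar>x\<bar> ^ j + \<bar>x\<bar> ^ j = 2 * (\<bar>x\<bar> ^ j * R ^ j) / R ^ j" using Rj assms by simp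
  also have "\<bar>x\<bar> ^ j * R ^ j \<le> \<bar>x\<bar> ^ j * \<bar>x\<bar> ^ j" using False assms by (intro mult_left_mono power_mono) auto
  also have "\<bar>x\<bar> ^ j * \<bar>x\<bar> ^ j = x ^ (2 * j)" by (simp add: power_add[symmetric] mult_2 power_abs[symmetric])
  finally show ?thesis using Rj unfolding y_def by (simp add: divide_right_mono)
qed

lemma truncated_moment_error:
  fixes L :: "real measure" and R :: real
  assumes R: "R > 0" and intL: "integrable L (\<lambda>x. x ^ j)" and intL2: "integrable L (\<lambda>x. x ^ (2 * j))"
    and gi: "integrable L (\<lambda>x. (max (- R) (min R x)) ^ j)"
  shows "\<bar>(\<integral>x. x ^ j \<partial>L) - (\<integral>x. (max (- R) (min R x)) ^ j \<partial>L)\<bar> \<le> 2 / R ^ j * (\<integral>x. x ^ (2 * j) \<partial>L)"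
proof -
  have "\<bar>(\<integral>x. x ^ j \<partial>L) - (\<integral>x. (max (- R) (min R x)) ^ j \<partial>L)\<bar>
      = \<bar>\<integral>x. x ^ j - (max (- R) (min R x)) ^ j \<partial>L\<bar>"
    using intL gi by (subst Bochner_Integration.integral_diff) auto
  also have "\<dots> \<le> (\<integral>x. \<bar>x ^ j - (max (- R) (min R x)) ^ j\<bar> \<partial>L)"
    using integral_norm_bound[of L "\<lambda>x. x ^ j - (max (- R) (min R x)) ^ j"] by simp
  also have "\<dots> \<le> (\<integral>x. 2 / R ^ j * x ^ (2 * j) \<partial>L)"
    using truncation_power_error[OF R] intL gi intL2
    by (intro integral_mono) (auto intro!: Bochner_Integration.integrable_diff integrable_abs)
  also have "\<dots> = 2 / R ^ j * (\<integral>x. x ^ (2 * j) \<partial>L)" by simp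
  finally show ?thesis .
qed

lemma LIMSEQ_bounded_above:
  assumes "(X :: nat \<Rightarrow> real) \<longlonglongrightarrow> a"
  obtains B where "\<And>n. X n \<le> B"
proof -
  from convergent_imp_Bseq[OF convergentI[OF assms]] obtain K where "\<And>n. norm (X n) \<le> K"
    by (auto simp: Bseq_def)
  then have "X n \<le> K" for n by (metis abs_le_D1 real_norm_def)
  then show ?thesis using that by blast
qed

text \<open>Moments pass to weak limits when they converge: uniform integrability comes from
  the boundedness of the next even moments.\<close>

context
  fixes M :: "nat \<Rightarrow> real measure" and N :: "real measure" and m :: "nat \<Rightarrow> real"
  assumes M: "\<And>n. real_distribution (M n)" and N: "real_distribution N" and conv: "weak_conv_m M N"
    and int: "\<And>n j. integrable (M n) (\<lambda>x. x ^ j)"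
    and lim: "\<And>j. (\<lambda>n. \<integral>x. x ^ j \<partial>M n) \<longlonglongrightarrow> m j"
begin

interpretation N: real_distribution N by (rule N)
interpretation Mn: real_distribution "M n" for n by (rule M)

lemma weak_limit_abs_moment:
  assumes B: "\<And>n. (\<integral>x. x ^ (2 * j) \<partial>M n) \<le> B"
  shows "integrable N (\<lambda>x. \<bar>x\<bar> ^ j) \<and> (\<integral>x. \<bar>x\<bar> ^ j \<partial>N) \<le> 1 + B"
proof -
  define f where "f i x = min (\<bar>x\<bar> ^ j) (real i)" for i :: nat and x :: real
  have cont: "isCont (f i) x" for i x unfolding f_def by (intro continuous_intros)
  have fb: "norm (f i x) \<le> real i" for i x unfolding f_def by auto
  have fm: "f i \<in> borel_measurable borel" for i unfolding f_def by measurable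
  have intM: "integrable (M n) (f i)" for n i
    by (rule Mn.integrable_const_bound[where B="real i"]) (use fb fm in auto)
  have intN: "integrable N (f i)" for i
    by (rule N.integrable_const_bound[where B="real i"]) (use fb fm in auto)
  have le: "(\<integral>x. f i x \<partial>M n) \<le> 1 + B" for i n
  proof -
    have "(\<integral>x. f i x \<partial>M n) \<le> (\<integral>x. 1 + x ^ (2 * j) \<partial>M n)"
    proof (rule integral_mono[OF intM])
      show "integrable (M n) (\<lambda>x. 1 + x ^ (2 * j))"
        using int by (intro Bochner_Integration.integrable_add) auto
      show "f i x \<le> 1 + x ^ (2 * j)" for x unfolding f_def using abs_power_le_even_power[of x j] by linarith
    qed
    also have "\<dots> = 1 + (\<integral>x. x ^ (2 * j) \<partial>M n)"
      using int Mn.prob_space[of n] by (subst Bochner_Integration.integral_add) auto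
    finally show ?thesis using B[of n] by simp
  qed
  have leN: "(\<integral>x. f i x \<partial>N) \<le> 1 + B" for i
    using weak_conv_imp_integral_bdd_continuous_conv[OF M N conv cont fb]
    by (rule LIMSEQ_le_const2) (use le in auto)
  have inc: "incseq (\<lambda>i. \<integral>x. f i x \<partial>N)"
    unfolding incseq_Suc_iff using intN by (intro allI integral_mono) (auto simp: f_def)
  have sup: "(\<lambda>i. \<integral>x. f i x \<partial>N) \<longlonglongrightarrow> (SUP i. \<integral>x. f i x \<partial>N)"
    by (rule LIMSEQ_incseq_SUP[OF _ inc]) (use leN in \<open>auto intro!: bdd_aboveI2[where M="1 + B"]\<close>)
  have ptw: "(\<lambda>i. f i x) \<longlonglongrightarrow> \<bar>x\<bar> ^ j" for x
  proof (rule tendsto_eventually)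
    obtain i0 :: nat where "\<bar>x\<bar> ^ j \<le> real i0" using real_arch_simple by blast
    then show "eventually (\<lambda>i. f i x = \<bar>x\<bar> ^ j) sequentially"
      unfolding eventually_sequentially f_def by (intro exI[of _ i0]) auto
  qed
  have mono: "mono (\<lambda>i. f i x)" for x unfolding f_def by (intro monoI) auto
  have "integrable N (\<lambda>x. \<bar>x\<bar> ^ j)" "(\<integral>x. \<bar>x\<bar> ^ j \<partial>N) = (SUP i. \<integral>x. f i x \<partial>N)"
    by (rule integrable_monotone_convergence[OF intN _ _ sup] integral_monotone_convergence[OF intN _ _ sup];
        use mono ptw in \<open>auto\<close>)+
  moreover have "(SUP i. \<integral>x. f i x \<partial>N) \<le> 1 + B" by (rule cSUP_least) (use leN in auto)
  ultimately show ?thesis by simp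
qed

text \<open>Comparing with the truncated (bounded continuous) power: the j-th moment of N is
  within E / R^j of m j, for every R > 0.\<close>

lemma weak_limit_moment_error:
  assumes iN: "integrable N (\<lambda>x. x ^ j)" and iN2: "integrable N (\<lambda>x. x ^ (2 * j))"
    and D: "(\<integral>x. x ^ (2 * j) \<partial>N) \<le> D" and B: "\<And>n. (\<integral>x. x ^ (2 * j) \<partial>M n) \<le> B" and R: "R > 0"
  shows "\<bar>(\<integral>x. x ^ j \<partial>N) - m j\<bar> \<le> (2 * B + 2 * D) / R ^ j"
proof -
  define g where "g x = (max (- R) (min R x)) ^ j" for x
  have gc: "isCont g x" for x unfolding g_def by (intro continuous_intros)
  have gb: "norm (g x) \<le> R ^ j" for x
  proof -
    have "\<bar>max (- R) (min R x)\<bar> \<le> R" using R by auto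
    then show ?thesis unfolding g_def real_norm_def power_abs by (intro power_mono) auto
  qed
  have gm: "g \<in> borel_measurable borel" unfolding g_def by measurable
  have giM: "integrable (M n) g" for n by (rule Mn.integrable_const_bound[where B="R ^ j"]) (use gb gm in auto)
  have giN: "integrable N g" by (rule N.integrable_const_bound[where B="R ^ j"]) (use gb gm in auto)
  have Rj: "2 / R ^ j > 0" using R by simp
  have a: "\<bar>(\<integral>x. x ^ j \<partial>M n) - (\<integral>x. g x \<partial>M n)\<bar> \<le> 2 / R ^ j * B" for n
    using truncated_moment_error[OF R int int giM[unfolded g_def]] B[of n] Rj unfolding g_def
    by (meson mult_left_mono order_trans less_imp_le)
  have cvg: "(\<lambda>n. \<bar>(\<integral>x. x ^ j \<partial>M n) - (\<integral>x. g x \<partial>M n)\<bar>) \<longlonglongrightarrow> \<bar>m j - (\<integral>x. g x \<partial>N)\<bar>"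
    by (intro tendsto_intros lim weak_conv_imp_integral_bdd_continuous_conv[OF M N conv gc gb])
  have b1: "\<bar>m j - (\<integral>x. g x \<partial>N)\<bar> \<le> 2 / R ^ j * B"
    by (rule LIMSEQ_le_const2[OF cvg]) (use a in auto)
  have b2: "\<bar>(\<integral>x. x ^ j \<partial>N) - (\<integral>x. g x \<partial>N)\<bar> \<le> 2 / R ^ j * D"
    using truncated_moment_error[OF R iN iN2 giN[unfolded g_def]] D Rj unfolding g_def
    by (meson mult_left_mono order_trans less_imp_le)
  have "\<bar>(\<integral>x. x ^ j \<partial>N) - m j\<bar> \<le> 2 / R ^ j * B + 2 / R ^ j * D" using b1 b2 by linarith
  also have "\<dots> = (2 * B + 2 * D) / R ^ j" by (simp add: add_divide_distrib[symmetric] algebra_simps)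
  finally show ?thesis .
qed

lemma weak_limit_moment: "integrable N (\<lambda>x. x ^ j) \<and> (\<integral>x. x ^ j \<partial>N) = m j"
proof (cases "j = 0")
  case True
  have "(\<lambda>n. \<integral>x. x ^ j \<partial>M n) = (\<lambda>n. 1)" using True Mn.prob_space by simp
  with lim[of j] have "m j = 1" using LIMSEQ_unique by (metis tendsto_const)
  then show ?thesis using True N.prob_space by simp
next
  case False
  obtain B where B: "\<And>n. (\<integral>x. x ^ (2 * j) \<partial>M n) \<le> B"
    using LIMSEQ_bounded_above[OF lim[of "2 * j"]] by blast
  obtain B' where B': "\<And>n. (\<integral>x. x ^ (2 * (2 * j)) \<partial>M n) \<le> B'"
    using LIMSEQ_bounded_above[OF lim[of "2 * (2 * j)"]] by blast
  have meas: "(\<lambda>x. x ^ j) \<in> borel_measurable N" by measurable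
  have iN: "integrable N (\<lambda>x. x ^ j)"
    using weak_limit_abs_moment[OF B] integrable_abs_iff[OF meas] by (simp add: power_abs)
  have iN2: "integrable N (\<lambda>x. x ^ (2 * j))" and D: "(\<integral>x. x ^ (2 * j) \<partial>N) \<le> 1 + B'"
    using weak_limit_abs_moment[OF B'] by (simp_all add: power_abs power_even_abs_numeral power_mult)
  have "(\<lambda>i. (2 * B + 2 * (1 + B')) / real (Suc i) ^ j) \<longlonglongrightarrow> 0"
  proof -
    have "(\<lambda>i. (2 * B + 2 * (1 + B')) * (1 / real (Suc i)) ^ j) \<longlonglongrightarrow> (2 * B + 2 * (1 + B')) * 0 ^ j"
      by (intro tendsto_intros LIMSEQ_Suc[OF lim_inverse_n'])
    then show ?thesis using False by (simp add: power_one_over divide_inverse power_inverse zero_power)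
  qed
  then have "\<bar>(\<integral>x. x ^ j \<partial>N) - m j\<bar> \<le> 0"
    by (rule LIMSEQ_le_const) (use weak_limit_moment_error[OF iN iN2 D B] in auto)
  then show ?thesis using iN by simp
qed

end

lemma moment_series_facts:
  fixes m :: "nat \<Rightarrow> real" and t :: real
  assumes summ: "summable (\<lambda>j. m j * \<bar>t\<bar> ^ j / fact j)" and mpos: "\<And>j. m j \<ge> 0"
  shows "(\<lambda>S. \<Sum>j\<le>2 * S. (\<i> * complex_of_real t) ^ j / fact j * complex_of_real (m j))
          \<longlonglongrightarrow> (\<Sum>j. (\<i> * complex_of_real t) ^ j / fact j * complex_of_real (m j))"
    and "(\<lambda>S. m (2 * S) * \<bar>t\<bar> ^ (2 * S) / fact (2 * S)) \<longlonglongrightarrow> 0"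
proof -
  let ?f = "\<lambda>j. (\<i> * complex_of_real t) ^ j / fact j * complex_of_real (m j)"
  have "norm (?f j) = m j * \<bar>t\<bar> ^ j / fact j" for j
  proof -
    have "norm (?f j) = (norm \<i> * norm (complex_of_real t)) ^ j / fact j * norm (complex_of_real (m j))"
      by (simp only: norm_mult norm_divide norm_power norm_fact)
    also have "\<dots> = \<bar>t\<bar> ^ j / fact j * m j" using mpos[of j] by (simp only: norm_ii norm_of_real mult_1 abs_of_nonneg)
    finally show ?thesis by (metis (no_types) mult.commute times_divide_eq_right)
  qed
  then have "(\<lambda>j. norm (?f j)) = (\<lambda>j. m j * \<bar>t\<bar> ^ j / fact j)" by (rule ext)
  then have "summable ?f" using summ summable_norm_cancel by metis
  then have "(\<lambda>n. \<Sum>j<n. ?f j) \<longlonglongrightarrow> suminf ?f" by (rule summable_LIMSEQ)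
  moreover have sm: "strict_mono (\<lambda>S::nat. Suc (2 * S))" by (rule strict_monoI) simp
  ultimately have "(\<lambda>S. \<Sum>j<Suc (2 * S). ?f j) \<longlonglongrightarrow> suminf ?f"
    using LIMSEQ_subseq_LIMSEQ unfolding comp_def by blast
  then show "(\<lambda>S. \<Sum>j\<le>2 * S. ?f j) \<longlonglongrightarrow> suminf ?f" by (simp only: lessThan_Suc_atMost)
  from summable_LIMSEQ_zero[OF summ]
  have "(\<lambda>j. m j * \<bar>t\<bar> ^ j / fact j) \<longlonglongrightarrow> 0" .
  moreover have "strict_mono (\<lambda>S::nat. 2 * S)" by (rule strict_monoI) simp
  ultimately show "(\<lambda>S. m (2 * S) * \<bar>t\<bar> ^ (2 * S) / fact (2 * S)) \<longlonglongrightarrow> 0"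
    using LIMSEQ_subseq_LIMSEQ unfolding comp_def by blast
qed

lemma char_moment_series:
  fixes N :: "real measure" and m :: "nat \<Rightarrow> real" and t :: real
  assumes N: "real_distribution N" and mom: "\<And>j. integrable N (\<lambda>x. x ^ j) \<and> (\<integral>x. x ^ j \<partial>N) = m j"
    and summ: "summable (\<lambda>j. m j * \<bar>t\<bar> ^ j / fact j)" and mpos: "\<And>j. m j \<ge> 0"
  shows "char N t = (\<Sum>j. (\<i> * complex_of_real t) ^ j / fact j * complex_of_real (m j))"
proof -
  interpret real_distribution N by (rule N)
  let ?P = "\<lambda>S. \<Sum>j\<le>2 * S. (\<i> * complex_of_real t) ^ j / fact j * complex_of_real (m j)"
  note pf = moment_series_facts[OF summ mpos]
  have "(\<lambda>S. char N t - ?P S) \<longlonglongrightarrow> 0"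
  proof (rule Lim_null_comparison)
    show "eventually (\<lambda>S. norm (char N t - ?P S) \<le> 2 * (m (2 * S) * \<bar>t\<bar> ^ (2 * S) / fact (2 * S))) sequentially"
    proof (intro always_eventually allI)
      fix S
      have "norm (char N t - ?P S) \<le> 2 * \<bar>t\<bar> ^ (2 * S) / fact (2 * S) * expectation (\<lambda>x. \<bar>x\<bar> ^ (2 * S))"
        using char_approx1[of "2 * S" t] mom by simp
      also have "expectation (\<lambda>x. \<bar>x\<bar> ^ (2 * S)) = m (2 * S)"
        using mom[of "2 * S"] by (simp add: power_mult power_even_abs_numeral)
      finally show "norm (char N t - ?P S) \<le> 2 * (m (2 * S) * \<bar>t\<bar> ^ (2 * S) / fact (2 * S))"
        by (simp add: mult_ac)
    qed
    show "(\<lambda>S. 2 * (m (2 * S) * \<bar>t\<bar> ^ (2 * S) / fact (2 * S))) \<longlonglongrightarrow> 0"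
      using tendsto_mult_right_zero[OF pf(2), of 2] by simp
  qed
  from tendsto_add[OF this pf(1)]
  have "(\<lambda>S. char N t) \<longlonglongrightarrow> 0 + (\<Sum>j. (\<i> * complex_of_real t) ^ j / fact j * complex_of_real (m j))"
    by simp
  from LIMSEQ_unique[OF tendsto_const this] show ?thesis by simp
qed

lemma moments_determine_distribution:
  fixes N N' :: "real measure" and m :: "nat \<Rightarrow> real"
  assumes N: "real_distribution N" and N': "real_distribution N'"
    and mom: "\<And>j. integrable N (\<lambda>x. x ^ j) \<and> (\<integral>x. x ^ j \<partial>N) = m j"
    and mom': "\<And>j. integrable N' (\<lambda>x. x ^ j) \<and> (\<integral>x. x ^ j \<partial>N') = m j"
    and summ: "\<And>t. summable (\<lambda>j. m j * \<bar>t\<bar> ^ j / fact j)" and mpos: "\<And>j. m j \<ge> 0"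
  shows "N = N'"
proof -
  have "char N = char N'"
    using char_moment_series[OF N mom summ mpos] char_moment_series[OF N' mom' summ mpos] by (intro ext) simp
  then show ?thesis by (rule Levy_uniqueness[OF N N'])
qed

text \<open>Bounded second moments imply tightness (Chebyshev).\<close>

lemma tight_if_bounded_second_moment:
  fixes M :: "nat \<Rightarrow> real measure"
  assumes M: "\<And>n. real_distribution (M n)" and int: "\<And>n. integrable (M n) (\<lambda>x. x\<^sup>2)"
    and B: "\<And>n. (\<integral>x. x\<^sup>2 \<partial>M n) \<le> B"
  shows "tight M"
  unfolding tight_def
proof (intro conjI allI impI M)
  fix \<epsilon> :: real assume e: "\<epsilon> > 0"
  define B' where "B' = max B 1"
  have B': "B' > 0" "\<And>n. (\<integral>x. x\<^sup>2 \<partial>M n) \<le> B'" using B by (auto simp: B'_def intro: le_max_iff_disj[THEN iffD2])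
  define R where "R = sqrt (2 * B' / \<epsilon>)"
  have pos: "2 * B' / \<epsilon> > 0" using B' e by simp
  have R: "R > 0" "R\<^sup>2 = 2 * B' / \<epsilon>" unfolding R_def using pos by auto
  have "measure (M n) {- R<..R} > 1 - \<epsilon>" for n
  proof -
    interpret real_distribution "M n" by (rule M)
    have "measure (M n) {x \<in> space (M n). R\<^sup>2 \<le> x\<^sup>2} \<le> (\<integral>x. x\<^sup>2 \<partial>M n) / R\<^sup>2"
      using R pos by (intro integral_Markov_inequality_measure[where A="space (M n)"] int) auto
    also have "\<dots> \<le> B' / R\<^sup>2" using B'(2)[of n] R pos by (intro divide_right_mono) auto
    also have "B' / R\<^sup>2 = \<epsilon> / 2" unfolding R(2) using B' e by simp
    finally have tail: "measure (M n) {x \<in> space (M n). R\<^sup>2 \<le> x\<^sup>2} \<le> \<epsilon> / 2" .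
    have sub: "UNIV - {- R<..R} \<subseteq> {x \<in> space (M n). R\<^sup>2 \<le> x\<^sup>2}"
    proof
      fix x assume "x \<in> UNIV - {- R<..R}"
      then have "R \<le> \<bar>x\<bar>" by auto
      then have "R\<^sup>2 \<le> \<bar>x\<bar>\<^sup>2" using R by (intro power_mono) auto
      then show "x \<in> {x \<in> space (M n). R\<^sup>2 \<le> x\<^sup>2}" by simp
    qed
    have "measure (M n) (UNIV - {- R<..R}) \<le> \<epsilon> / 2"
      using finite_measure_mono[OF sub] tail by simp
    moreover have "measure (M n) (UNIV - {- R<..R}) = 1 - measure (M n) {- R<..R}"
      using prob_compl[of "{- R<..R}"] by simp
    ultimately show ?thesis using e by linarith
  qed
  then show "\<exists>a b. a < b \<and> (\<forall>n. 1 - \<epsilon> < measure (M n) {a<..b})"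
    using R(1) by (intro exI[of _ "- R"] exI[of _ R]) auto
qed

text \<open>If all moments of M n converge to m j and the exponential
  moment series converges, then M n converges weakly to the unique distribution with
  moments m j: the sequence is tight, every weakly convergent subsequence has a limit
  with moments m j, and this limit is unique.\<close>

theorem method_of_moments:
  fixes M :: "nat \<Rightarrow> real measure" and m :: "nat \<Rightarrow> real"
  assumes M: "\<And>n. real_distribution (M n)" and int: "\<And>n j. integrable (M n) (\<lambda>x. x ^ j)"
    and lim: "\<And>j. (\<lambda>n. \<integral>x. x ^ j \<partial>M n) \<longlonglongrightarrow> m j"
    and summ: "\<And>t. summable (\<lambda>j. m j * \<bar>t\<bar> ^ j / fact j)" and mpos: "\<And>j. m j \<ge> 0"
  shows "\<exists>\<nu>. real_distribution \<nu> \<and> (\<forall>j. integrable \<nu> (\<lambda>x. x ^ j) \<and> (\<integral>x. x ^ j \<partial>\<nu>) = m j)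
    \<and> (\<forall>N. real_distribution N \<and> (\<forall>j. integrable N (\<lambda>x. x ^ j) \<and> (\<integral>x. x ^ j \<partial>N) = m j) \<longrightarrow> N = \<nu>)
    \<and> weak_conv_m M \<nu>"
proof -
  have subseq_limit: "integrable N (\<lambda>x. x ^ j) \<and> (\<integral>x. x ^ j \<partial>N) = m j"
    if "strict_mono s" "real_distribution N" "weak_conv_m (M \<circ> s) N" for s N j
    using weak_limit_moment[of "M \<circ> s" N m] LIMSEQ_subseq_LIMSEQ[OF lim that(1)] M int that
    by (simp add: comp_def)
  obtain B where "\<And>n. (\<integral>x. x ^ 2 \<partial>M n) \<le> B" using LIMSEQ_bounded_above[OF lim[of 2]] by blast
  then have tight: "tight M" by (intro tight_if_bounded_second_moment M int)
  then obtain r \<nu> where r: "strict_mono r" and \<nu>: "real_distribution \<nu>" and "weak_conv_m (M \<circ> id \<circ> r) \<nu>"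
    using tight_imp_convergent_subsubsequence[of M id] by (auto simp: strict_mono_def)
  then have mom: "integrable \<nu> (\<lambda>x. x ^ j) \<and> (\<integral>x. x ^ j \<partial>\<nu>) = m j" for j
    by (intro subseq_limit[of r]) auto
  have uniq: "N = \<nu>" if "real_distribution N" "\<And>j. integrable N (\<lambda>x. x ^ j) \<and> (\<integral>x. x ^ j \<partial>N) = m j" for N
    using moments_determine_distribution[OF that(1) \<nu> that(2) mom summ mpos] .
  have "weak_conv_m M \<nu>"
    using M \<nu> tight by (rule tight_subseq_weak_converge) (use uniq subseq_limit in blast)
  with \<nu> mom uniq show ?thesis by blast
qed

definition scaled_outdeg :: "nat \<Rightarrow> nat \<Rightarrow> real measure" where
  "scaled_outdeg k n = distr (measure_pmf (map_pmf root_outdeg (random_tree k n))) borel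
     (\<lambda>d. real n powr (- (real k / (real k + 1))) * real d)"

lemma scaled_outdeg_real_distribution: "real_distribution (scaled_outdeg k n)"
proof -
  have "prob_space (scaled_outdeg k n)" unfolding scaled_outdeg_def
    by (rule prob_space.prob_space_distr[OF prob_space_measure_pmf]) simp
  moreover have "sets (scaled_outdeg k n) = sets borel" unfolding scaled_outdeg_def by simp
  ultimately show ?thesis unfolding real_distribution_def real_distribution_axioms_def by blast
qed

lemma set_pmf_root_outdeg:
  assumes "k \<ge> 1"
  shows "set_pmf (map_pmf root_outdeg (random_tree k n)) \<subseteq> {..n}"
proof
  fix d assume "d \<in> set_pmf (map_pmf root_outdeg (random_tree k n))"
  then have "root_prob k n d \<noteq> 0" by (metis set_pmf_iff pmf_root_outdeg[OF assms])
  then show "d \<in> {..n}" using root_prob_beyond by (metis atMost_iff not_le)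
qed

lemma scaled_outdeg_integral:
  fixes f :: "real \<Rightarrow> real"
  assumes "k \<ge> 1" and f[measurable]: "f \<in> borel_measurable borel"
  shows "integrable (scaled_outdeg k n) f"
    and "(\<integral>x. f x \<partial>scaled_outdeg k n) = expect_root k n (\<lambda>d. f (real n powr (- (real k / (real k + 1))) * real d))"
proof -
  let ?p = "map_pmf root_outdeg (random_tree k n)" and ?r = "real n powr (- (real k / (real k + 1)))"
  have fin: "finite (set_pmf ?p)" using set_pmf_root_outdeg[OF assms(1)] finite_subset by blast
  have "integrable (measure_pmf ?p) (\<lambda>d. f (?r * real d))" by (rule integrable_measure_pmf_finite[OF fin])
  then show "integrable (scaled_outdeg k n) f"
    unfolding scaled_outdeg_def by (subst integrable_distr_eq) simp_all
  have "(\<integral>x. f x \<partial>scaled_outdeg k n) = (\<integral>d. f (?r * real d) \<partial>measure_pmf ?p)"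
    unfolding scaled_outdeg_def by (rule integral_distr) auto
  also have "\<dots> = (\<Sum>d\<in>{..n}. f (?r * real d) * pmf ?p d)"
    using set_pmf_root_outdeg[OF assms(1)] by (intro integral_measure_pmf_real) auto
  also have "\<dots> = expect_root k n (\<lambda>d. f (?r * real d))"
    unfolding expect_root_def pmf_root_outdeg[OF assms(1)] by (simp add: mult.commute)
  finally show "(\<integral>x. f x \<partial>scaled_outdeg k n) = expect_root k n (\<lambda>d. f (?r * real d))" .
qed

lemma cdf_scaled_outdeg:
  "cdf (measure_pmf (map_pmf (\<lambda>ts. real n powr (- (real k / (real k + 1))) * real (root_outdeg ts)) (random_tree k n))) x
     = cdf (scaled_outdeg k n) x"
  unfolding cdf_def scaled_outdeg_def by (subst measure_distr) (auto simp: vimage_def)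

theorem root_outdeg_exact_law:
  assumes "k \<ge> 1"
  shows "pmf (map_pmf root_outdeg (random_tree k n)) m =
              ((real m - (real k - 1) / real k) gchoose m)
              / ((real n - real k / (real k + 1)) gchoose n)
              * (\<Sum>l = 0..m. real (m choose l) * (-1) ^ l
                   * ((real n - 1 - real k * real l / (real k + 1)) gchoose n))"
  using pmf_root_outdeg[OF assms] root_prob_closed_form[OF assms]
  by (simp add: closed_form_def root_coeff_def size_coeff_def alt_binom_sum_def shifted_binom_def)

theorem root_outdeg_limit_law:
  assumes "k \<ge> 1"
  shows "\<exists>M :: real measure. real_distribution M
           \<and> (\<forall>s :: nat. integrable M (\<lambda>x. x ^ s)
                 \<and> (\<integral>x. x ^ s \<partial>M) =
                    Gamma (1 / (real k + 1)) * Gamma (real s + 1 / real k)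
                    / (Gamma (1 / real k) * Gamma (real k / (real k + 1) * real s + 1 / (real k + 1))))
           \<and> (\<forall>N :: real measure. real_distribution N
                 \<and> (\<forall>s :: nat. integrable N (\<lambda>x. x ^ s) \<and> (\<integral>x. x ^ s \<partial>N) = (\<integral>x. x ^ s \<partial>M))
                 \<longrightarrow> N = M)
           \<and> weak_conv_m
               (\<lambda>n. measure_pmf (map_pmf
                  (\<lambda>ts. real n powr (- (real k / (real k + 1))) * real (root_outdeg ts))
                  (random_tree k n)))
               M"
proof -
  have integrable: "integrable (scaled_outdeg k n) (\<lambda>x. x ^ j)" for n j
    by (rule scaled_outdeg_integral(1)[OF assms]) simp
  have "(\<integral>x. x ^ j \<partial>scaled_outdeg k n) = scaled_moment k n j" for n j
    unfolding scaled_moment_def by (rule scaled_outdeg_integral(2)[OF assms]) simp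
  then have moments: "(\<lambda>n. \<integral>x. x ^ j \<partial>scaled_outdeg k n) \<longlonglongrightarrow> gamma_moment k j" for j
    using scaled_moment_lim[OF assms] by simp
  obtain \<nu> where \<nu>: "real_distribution \<nu>" and mom: "\<forall>j. integrable \<nu> (\<lambda>x. x ^ j) \<and> (\<integral>x. x ^ j \<partial>\<nu>) = gamma_moment k j"
      and uniq: "\<forall>N. real_distribution N \<and> (\<forall>j. integrable N (\<lambda>x. x ^ j) \<and> (\<integral>x. x ^ j \<partial>N) = gamma_moment k j)
        \<longrightarrow> N = \<nu>"
      and conv: "weak_conv_m (scaled_outdeg k) \<nu>"
    using method_of_moments[OF scaled_outdeg_real_distribution integrable moments
        gamma_moment_summable[OF assms] less_imp_le[OF gamma_moment_pos[OF assms]]] by blast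
  show ?thesis
  proof (intro exI[of _ \<nu>] conjI allI impI)
    show "real_distribution \<nu>" by (rule \<nu>)
    show "integrable \<nu> (\<lambda>x. x ^ s)" and "(\<integral>x. x ^ s \<partial>\<nu>) = Gamma (1 / (real k + 1)) * Gamma (real s + 1 / real k)
        / (Gamma (1 / real k) * Gamma (real k / (real k + 1) * real s + 1 / (real k + 1)))" for s
      using mom unfolding gamma_moment_def by auto
    show "N = \<nu>" if "real_distribution N
        \<and> (\<forall>s. integrable N (\<lambda>x. x ^ s) \<and> (\<integral>x. x ^ s \<partial>N) = (\<integral>x. x ^ s \<partial>\<nu>))" for N
      using uniq that mom by simp
    show "weak_conv_m (\<lambda>n. measure_pmf (map_pmf
        (\<lambda>ts. real n powr (- (real k / (real k + 1))) * real (root_outdeg ts)) (random_tree k n))) \<nu>"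
      using conv unfolding weak_conv_m_def weak_conv_def cdf_scaled_outdeg .
  qed
qed

theorem theorem2:
  fixes k :: nat
  assumes "k \<ge> 1"
  shows "(\<forall>n m :: nat.
            pmf (map_pmf root_outdeg (random_tree k n)) m =
              ((real m - (real k - 1) / real k) gchoose m)
              / ((real n - real k / (real k + 1)) gchoose n)
              * (\<Sum>l = 0..m. real (m choose l) * (-1) ^ l
                   * ((real n - 1 - real k * real l / (real k + 1)) gchoose n)))
       \<and> (\<exists>M :: real measure. real_distribution M
           \<and> (\<forall>s :: nat. integrable M (\<lambda>x. x ^ s)
                 \<and> (\<integral>x. x ^ s \<partial>M) =
                    Gamma (1 / (real k + 1)) * Gamma (real s + 1 / real k)
                    / (Gamma (1 / real k) * Gamma (real k / (real k + 1) * real s + 1 / (real k + 1))))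
           \<and> (\<forall>N :: real measure. real_distribution N
                 \<and> (\<forall>s :: nat. integrable N (\<lambda>x. x ^ s) \<and> (\<integral>x. x ^ s \<partial>N) = (\<integral>x. x ^ s \<partial>M))
                 \<longrightarrow> N = M)
           \<and> weak_conv_m
               (\<lambda>n. measure_pmf (map_pmf
                  (\<lambda>ts. real n powr (- (real k / (real k + 1))) * real (root_outdeg ts))
                  (random_tree k n)))
               M)"
  using root_outdeg_exact_law[OF assms] root_outdeg_limit_law[OF assms] by blast

end
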